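(* There is a ring homomorphism $\lambda\colon\mathrm{B}(\mathcal{R})\to\mathrm{B}(\mathbb{Z})$ such that for every finite connected rack $R$, $$\lambda(b(R))=\sum_{n\geq1}\lambda_n(R)\,c_n,$$ where $\lambda_n(R)$ is the number of $n$-cycles in the cycle decomposition of a left multiplication $\ell_x$ of $R$ (for any $x\in R$; this does not depend on $x$).
   Context: A rack is a set $R$ with a binary operation $\rhd$ such that every left multiplication $\ell_a\colon b\mapsto a\rhd b$ is a bijection and $a\rhd(b\rhd c)=(a\rhd b)\rhd(a\rhd c)$ for all $a,b,c$. The inner automorphism group $\mathrm{Inn}(R)$ is the subgroup of the symmetric group on $R$ generated by all $\ell_a$; a rack is connected if it is non-empty and $\mathrm{Inn}(R)$ acts transitively on $R$. A subrack is a subset $S$ with $\ell_s(S)=S$ for all $s\in S$; a decomposition of $R$ into $S$ and $T$ means $S,T$ are disjoint subracks (possibly empty) with $S\cup T=R$. The Burnside ring of finite racks $\mathrm{B}(\mathcal{R})$ is the abelian group generated by symbols $b(R)$, one for each finite rack $R$, subject to $b(R_1)=b(R_2)$ whenever $R_1\cong R_2$ and $b(R)=b(S)+b(T)$ whenever $R$ decomposes into $S$ and $T$, with ring structure $b(R)b(R')=b(R\times R')$ (cartesian product, componentwise operation). $\mathrm{B}(\mathbb{Z})$ is the Grothendieck ring of isomorphism classes of pairs $(X,\pi)$, $X$ a finite set and $\pi$ a permutation of $X$, with addition from disjoint union and multiplication from cartesian product; $c_n$ denotes the class of an $n$-cycle acting on an $n$-element set. *)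

theory Defs
  imports "HOL-Library.Poly_Mapping" "HOL-Library.Nat_Bijection" "HOL-Combinatorics.Permutations" "HOL-Combinatorics.Orbits"
begin

text \<open>A rack on the carrier set R with operation op (op a b stands for a \<rhd> b).\<close>
definition is_rack :: "'a set \<Rightarrow> ('a \<Rightarrow> 'a \<Rightarrow> 'a) \<Rightarrow> bool" where
  "is_rack R op \<longleftrightarrow>
     (\<forall>a\<in>R. bij_betw (op a) R R) \<and>
     (\<forall>a\<in>R. \<forall>b\<in>R. \<forall>c\<in>R. op a (op b c) = op (op a b) (op a c))"

text \<open>Orbit of x under Inn(R), the group generated by the left multiplications
  (as permutations of R): closure of x under all l_a and their inverses.\<close>
inductive_set inn_orbit :: "'a set \<Rightarrow> ('a \<Rightarrow> 'a \<Rightarrow> 'a) \<Rightarrow> 'a \<Rightarrow> 'a set"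
  for R op x where
  base: "x \<in> inn_orbit R op x"
| left: "a \<in> R \<Longrightarrow> y \<in> inn_orbit R op x \<Longrightarrow> op a y \<in> inn_orbit R op x"
| left_inv: "a \<in> R \<Longrightarrow> y \<in> inn_orbit R op x \<Longrightarrow> inv_into R (op a) y \<in> inn_orbit R op x"

definition connected_rack :: "'a set \<Rightarrow> ('a \<Rightarrow> 'a \<Rightarrow> 'a) \<Rightarrow> bool" where
  "connected_rack R op \<longleftrightarrow> is_rack R op \<and> R \<noteq> {} \<and>
     (\<forall>x\<in>R. \<forall>y\<in>R. y \<in> inn_orbit R op x)"

definition is_subrack :: "'a set \<Rightarrow> 'a set \<Rightarrow> ('a \<Rightarrow> 'a \<Rightarrow> 'a) \<Rightarrow> bool" where
  "is_subrack S R op \<longleftrightarrow> S \<subseteq> R \<and> (\<forall>s\<in>S. op s ` S = S)"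

definition rack_iso :: "'a set \<Rightarrow> ('a \<Rightarrow> 'a \<Rightarrow> 'a) \<Rightarrow> 'b set \<Rightarrow> ('b \<Rightarrow> 'b \<Rightarrow> 'b) \<Rightarrow> bool" where
  "rack_iso X op Y op' \<longleftrightarrow>
     (\<exists>h. bij_betw h X Y \<and> (\<forall>a\<in>X. \<forall>b\<in>X. h (op a b) = op' (h a) (h b)))"

text \<open>Finite racks with carrier a subset of nat (every finite rack is isomorphic to one).\<close>
typedef rcode = "{(X :: nat set, op :: nat \<Rightarrow> nat \<Rightarrow> nat). finite X \<and> is_rack X op}"
  by (rule exI[of _ "({}, \<lambda>a b. a)"]) (simp add: is_rack_def)

inductive_set br_rel :: "(rcode \<Rightarrow>\<^sub>0 int) set" where
  iso: "Rep_rcode A = (X, op) \<Longrightarrow> Rep_rcode B = (Y, op') \<Longrightarrow> rack_iso X op Y op' \<Longrightarrow>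
          Poly_Mapping.single A 1 - Poly_Mapping.single B 1 \<in> br_rel"
| dec: "Rep_rcode A = (X, op) \<Longrightarrow> is_subrack S X op \<Longrightarrow> is_subrack T X op \<Longrightarrow>
          S \<inter> T = {} \<Longrightarrow> S \<union> T = X \<Longrightarrow> Rep_rcode B = (S, op) \<Longrightarrow> Rep_rcode C = (T, op) \<Longrightarrow>
          Poly_Mapping.single A 1 - Poly_Mapping.single B 1 - Poly_Mapping.single C 1 \<in> br_rel"
| zero: "0 \<in> br_rel"
| diff: "u \<in> br_rel \<Longrightarrow> v \<in> br_rel \<Longrightarrow> u - v \<in> br_rel"

definition br_eq :: "(rcode \<Rightarrow>\<^sub>0 int) \<Rightarrow> (rcode \<Rightarrow>\<^sub>0 int) \<Rightarrow> bool" where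
  "br_eq u v \<longleftrightarrow> u - v \<in> br_rel"

lemma equivp_br_eq: "equivp br_eq"
proof (rule equivpI)
  show "reflp br_eq" by (rule reflpI) (simp add: br_eq_def br_rel.zero)
  show "symp br_eq"
  proof (rule sympI)
    fix x y assume "br_eq x y"
    then have "0 - (x - y) \<in> br_rel" unfolding br_eq_def by (rule br_rel.diff[OF br_rel.zero])
    then show "br_eq y x" by (simp add: br_eq_def)
  qed
  show "transp br_eq"
  proof (rule transpI)
    fix x y z assume "br_eq x y" "br_eq y z"
    then have "(x - y) - (0 - (y - z)) \<in> br_rel" unfolding br_eq_def
      by (intro br_rel.diff[of "x - y"] br_rel.diff[OF br_rel.zero])
    then show "br_eq x z" by (simp add: br_eq_def)
  qed
qed

quotient_type br = "rcode \<Rightarrow>\<^sub>0 int" / br_eq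
  by (rule equivp_br_eq)

definition rcode_prod :: "rcode \<Rightarrow> rcode \<Rightarrow> rcode" where
  "rcode_prod A B = (case Rep_rcode A of (X, op) \<Rightarrow> case Rep_rcode B of (Y, op') \<Rightarrow>
     Abs_rcode (prod_encode ` (X \<times> Y),
       \<lambda>u v. prod_encode (op (fst (prod_decode u)) (fst (prod_decode v)),
                          op' (snd (prod_decode u)) (snd (prod_decode v)))))"

definition free_mul_r :: "(rcode \<Rightarrow>\<^sub>0 int) \<Rightarrow> (rcode \<Rightarrow>\<^sub>0 int) \<Rightarrow> (rcode \<Rightarrow>\<^sub>0 int)" where
  "free_mul_r f g = (\<Sum>a\<in>Poly_Mapping.keys f. \<Sum>b\<in>Poly_Mapping.keys g.
      Poly_Mapping.single (rcode_prod a b) (Poly_Mapping.lookup f a * Poly_Mapping.lookup g b))"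

definition b_rack :: "nat set \<Rightarrow> (nat \<Rightarrow> nat \<Rightarrow> nat) \<Rightarrow> br" where
  "b_rack X op = abs_br (Poly_Mapping.single (Abs_rcode (X, op)) 1)"

instantiation br :: "{zero, one, plus, times}"
begin
definition zero_br_def: "0 = abs_br 0"
definition one_br_def: "1 = b_rack {0} (\<lambda>a b. a)"
definition plus_br_def: "x + y = abs_br (rep_br x + rep_br y)"
definition times_br_def: "x * y = abs_br (free_mul_r (rep_br x) (rep_br y))"
instance ..
end

typedef pcode = "{(X :: nat set, \<pi> :: nat \<Rightarrow> nat). finite X \<and> \<pi> permutes X}"
  by (rule exI[of _ "({}, id)"]) (simp add: permutes_id)

definition perm_iso :: "nat set \<Rightarrow> (nat \<Rightarrow> nat) \<Rightarrow> nat set \<Rightarrow> (nat \<Rightarrow> nat) \<Rightarrow> bool" where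
  "perm_iso X \<pi> Y \<sigma> \<longleftrightarrow> (\<exists>h. bij_betw h X Y \<and> (\<forall>x\<in>X. h (\<pi> x) = \<sigma> (h x)))"

inductive_set bz_rel :: "(pcode \<Rightarrow>\<^sub>0 int) set" where
  iso: "Rep_pcode A = (X, \<pi>) \<Longrightarrow> Rep_pcode B = (Y, \<sigma>) \<Longrightarrow> perm_iso X \<pi> Y \<sigma> \<Longrightarrow>
          Poly_Mapping.single A 1 - Poly_Mapping.single B 1 \<in> bz_rel"
| dec: "Rep_pcode A = (X, \<pi>) \<Longrightarrow> \<pi> ` S = S \<Longrightarrow> \<pi> ` T = T \<Longrightarrow>
          S \<inter> T = {} \<Longrightarrow> S \<union> T = X \<Longrightarrow>
          Rep_pcode B = (S, \<lambda>x. if x \<in> S then \<pi> x else x) \<Longrightarrow>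
          Rep_pcode C = (T, \<lambda>x. if x \<in> T then \<pi> x else x) \<Longrightarrow>
          Poly_Mapping.single A 1 - Poly_Mapping.single B 1 - Poly_Mapping.single C 1 \<in> bz_rel"
| zero: "0 \<in> bz_rel"
| diff: "u \<in> bz_rel \<Longrightarrow> v \<in> bz_rel \<Longrightarrow> u - v \<in> bz_rel"

definition bz_eq :: "(pcode \<Rightarrow>\<^sub>0 int) \<Rightarrow> (pcode \<Rightarrow>\<^sub>0 int) \<Rightarrow> bool" where
  "bz_eq u v \<longleftrightarrow> u - v \<in> bz_rel"

lemma equivp_bz_eq: "equivp bz_eq"
proof (rule equivpI)
  show "reflp bz_eq" by (rule reflpI) (simp add: bz_eq_def bz_rel.zero)
  show "symp bz_eq"
  proof (rule sympI)
    fix x y assume "bz_eq x y"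
    then have "0 - (x - y) \<in> bz_rel" unfolding bz_eq_def by (rule bz_rel.diff[OF bz_rel.zero])
    then show "bz_eq y x" by (simp add: bz_eq_def)
  qed
  show "transp bz_eq"
  proof (rule transpI)
    fix x y z assume "bz_eq x y" "bz_eq y z"
    then have "(x - y) - (0 - (y - z)) \<in> bz_rel" unfolding bz_eq_def
      by (intro bz_rel.diff[of "x - y"] bz_rel.diff[OF bz_rel.zero])
    then show "bz_eq x z" by (simp add: bz_eq_def)
  qed
qed

quotient_type bz = "pcode \<Rightarrow>\<^sub>0 int" / bz_eq
  by (rule equivp_bz_eq)

definition pcode_prod :: "pcode \<Rightarrow> pcode \<Rightarrow> pcode" where
  "pcode_prod A B = (case Rep_pcode A of (X, \<pi>) \<Rightarrow> case Rep_pcode B of (Y, \<sigma>) \<Rightarrow>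
     Abs_pcode (prod_encode ` (X \<times> Y),
       \<lambda>u. if u \<in> prod_encode ` (X \<times> Y)
           then prod_encode (\<pi> (fst (prod_decode u)), \<sigma> (snd (prod_decode u))) else u))"

definition free_mul_z :: "(pcode \<Rightarrow>\<^sub>0 int) \<Rightarrow> (pcode \<Rightarrow>\<^sub>0 int) \<Rightarrow> (pcode \<Rightarrow>\<^sub>0 int)" where
  "free_mul_z f g = (\<Sum>a\<in>Poly_Mapping.keys f. \<Sum>b\<in>Poly_Mapping.keys g.
      Poly_Mapping.single (pcode_prod a b) (Poly_Mapping.lookup f a * Poly_Mapping.lookup g b))"

definition b_perm :: "nat set \<Rightarrow> (nat \<Rightarrow> nat) \<Rightarrow> bz" where
  "b_perm X \<pi> = abs_bz (Poly_Mapping.single (Abs_pcode (X, \<pi>)) 1)"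

instantiation bz :: "{zero, one, plus, times}"
begin
definition zero_bz_def: "0 = abs_bz 0"
definition one_bz_def: "1 = b_perm {0} id"
definition plus_bz_def: "x + y = abs_bz (rep_bz x + rep_bz y)"
definition times_bz_def: "x * y = abs_bz (free_mul_z (rep_bz x) (rep_bz y))"
instance ..
end

definition cyc :: "nat \<Rightarrow> bz" where
  "cyc n = b_perm {0..<n} (\<lambda>i. if i < n then (i + 1) mod n else i)"

definition bz_nsmul :: "nat \<Rightarrow> bz \<Rightarrow> bz" where
  "bz_nsmul k x = (((+) x) ^^ k) 0"

primrec bz_sum :: "(nat \<Rightarrow> bz) \<Rightarrow> nat \<Rightarrow> bz" where
  "bz_sum f 0 = 0"
| "bz_sum f (Suc N) = bz_sum f N + f (Suc N)"

definition num_cycles :: "nat \<Rightarrow> ('a \<Rightarrow> 'a) \<Rightarrow> 'a set \<Rightarrow> nat" where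
  "num_cycles n f X = card {C. \<exists>y\<in>X. C = orbit f y \<and> card C = n}"

end

(*
  A finite rack splits into Inn-orbits, hence by induction into connected subracks, and
  any two decompositions have a common refinement.  So sending a connected rack R to the
  class of the permutation set (R, l_x) -- independent of x, as left multiplications by
  elements of one Inn-orbit are conjugate -- extends additively to all finite racks,
  respects isomorphisms, and descends to B(R).
  It is multiplicative because for connected racks R, R' every Inn-orbit C of R x R' is a
  connected subrack on which l_(x,x') agrees with l_c for some c in C: since
  l_(u |> u) = l_u, the coordinates of (x, x') can be moved independently inside C without
  changing the left multiplication.  Hence the additive map sends R x R' to the class of
  l_(x,x') = l_x x l_x'.  Finally, a permutation set is the sum of its cycles.
*)
theory Submission
  imports Defs
begin

section \<open>Racks, Inn-orbits and decompositions\<close>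

lemma rack_left_bij: "is_rack X op \<Longrightarrow> a \<in> X \<Longrightarrow> bij_betw (op a) X X"
  by (simp add: is_rack_def)

lemma rack_left_distrib:
  "is_rack X op \<Longrightarrow> a \<in> X \<Longrightarrow> b \<in> X \<Longrightarrow> c \<in> X \<Longrightarrow> op a (op b c) = op (op a b) (op a c)"
  by (simp add: is_rack_def)

lemma rack_closed: "is_rack X op \<Longrightarrow> a \<in> X \<Longrightarrow> b \<in> X \<Longrightarrow> op a b \<in> X"
  by (meson bij_betwE rack_left_bij)

lemma rack_left_inj_on: "is_rack X op \<Longrightarrow> a \<in> X \<Longrightarrow> inj_on (op a) X"
  by (meson bij_betw_imp_inj_on rack_left_bij)

lemma rack_left_image: "is_rack X op \<Longrightarrow> a \<in> X \<Longrightarrow> op a ` X = X"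
  by (meson bij_betw_imp_surj_on rack_left_bij)

lemma rack_left_inv_closed: "is_rack X op \<Longrightarrow> a \<in> X \<Longrightarrow> y \<in> X \<Longrightarrow> inv_into X (op a) y \<in> X"
  by (metis inv_into_into rack_left_image)

lemma rack_left_inv_cancel: "is_rack X op \<Longrightarrow> a \<in> X \<Longrightarrow> y \<in> X \<Longrightarrow> op a (inv_into X (op a) y) = y"
  by (metis f_inv_into_f rack_left_image)

lemma rack_left_self: assumes "is_rack X op" "a \<in> X" "z \<in> X" shows "op (op a a) z = op a z"
proof -
  define z' where "z' = inv_into X (op a) z"
  have z': "z' \<in> X" "op a z' = z"
    unfolding z'_def using rack_left_inv_closed[OF assms] rack_left_inv_cancel[OF assms] by auto
  show ?thesis using rack_left_distrib[OF assms(1,2,2) z'(1)] z'(2) by simp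
qed

lemma rack_left_inv_self:
  assumes X: "is_rack X op" and "a \<in> X" "z \<in> X" shows "op (inv_into X (op a) a) z = op a z"
proof -
  define t where "t = inv_into X (op a) a"
  have t: "t \<in> X" "op a t = a"
    unfolding t_def using rack_left_inv_closed[OF assms(1,2,2)] rack_left_inv_cancel[OF assms(1,2,2)] by auto
  have "op a (op t z) = op (op a t) (op a z)" by (rule rack_left_distrib[OF X \<open>a \<in> X\<close> t(1) \<open>z \<in> X\<close>])
  also have "\<dots> = op a (op a z)" using t(2) by simp
  finally have "op t z = op a z"
    using inj_onD[OF rack_left_inj_on[OF X \<open>a \<in> X\<close>]] rack_closed[OF X] t(1) assms(2,3) by blast
  then show ?thesis unfolding t_def .
qed

lemma subrack_is_rack: assumes X: "is_rack X op" and S: "is_subrack S X op" shows "is_rack S op"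
proof -
  have SX: "S \<subseteq> X" using S unfolding is_subrack_def by simp
  show ?thesis unfolding is_rack_def
  proof (intro conjI ballI)
    fix a assume a: "a \<in> S"
    then have "inj_on (op a) S" using inj_on_subset[OF rack_left_inj_on[OF X] SX] SX by blast
    then show "bij_betw (op a) S S" using S a unfolding is_subrack_def bij_betw_def by auto
  next
    fix a b c assume "a \<in> S" "b \<in> S" "c \<in> S"
    then show "op a (op b c) = op (op a b) (op a c)" using rack_left_distrib[OF X] SX by blast
  qed
qed

lemma subrack_self: "is_rack X op \<Longrightarrow> is_subrack X X op"
  unfolding is_subrack_def by (simp add: rack_left_image)

lemma inn_orbit_subset: assumes "is_rack X op" "x \<in> X" shows "inn_orbit X op x \<subseteq> X"
proof
  fix y assume "y \<in> inn_orbit X op x" then show "y \<in> X"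
    by induct (auto simp: assms rack_closed rack_left_inv_closed)
qed

lemma inn_orbit_trans:
  assumes "y \<in> inn_orbit X op x" "z \<in> inn_orbit X op y" shows "z \<in> inn_orbit X op x"
  using assms(2)
proof induct
  case (left a z) show ?case using left(1,3) by (rule inn_orbit.left)
next
  case (left_inv a z) show ?case using left_inv(1,3) by (rule inn_orbit.left_inv)
qed (rule assms(1))

lemma inn_orbit_sym:
  assumes X: "is_rack X op" and x: "x \<in> X" and y: "y \<in> inn_orbit X op x"
  shows "x \<in> inn_orbit X op y"
  using y
proof induct
  case base then show ?case by (rule inn_orbit.base)
next
  case (left a y)
  have "y \<in> X" using left(2) inn_orbit_subset[OF X x] by blast
  then have "y = inv_into X (op a) (op a y)" using rack_left_inj_on[OF X left(1)] by simp
  then have "y \<in> inn_orbit X op (op a y)" by (metis inn_orbit.base inn_orbit.left_inv left(1))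
  then show ?case using inn_orbit_trans[OF _ left(3)] by blast
next
  case (left_inv a y)
  have "y \<in> X" using left_inv(2) inn_orbit_subset[OF X x] by blast
  then have "y = op a (inv_into X (op a) y)" using rack_left_inv_cancel[OF X left_inv(1)] by simp
  then have "y \<in> inn_orbit X op (inv_into X (op a) y)" by (metis inn_orbit.base inn_orbit.left left_inv(1))
  then show ?case using inn_orbit_trans[OF _ left_inv(3)] by blast
qed

lemma inn_orbit_subset_invariant:
  assumes X: "is_rack X op" and "C \<subseteq> X" and inv: "\<And>a. a \<in> X \<Longrightarrow> op a ` C = C" and "x \<in> C"
  shows "inn_orbit X op x \<subseteq> C"
proof
  fix y assume "y \<in> inn_orbit X op x" then show "y \<in> C"
  proof induct
    case (left_inv a y)
    then obtain s where "s \<in> C" "y = op a s" using inv by (metis imageE)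
    then show ?case using inv_into_f_f[OF rack_left_inj_on[OF X left_inv(1)]] \<open>C \<subseteq> X\<close> by auto
  qed (use assms in auto)
qed

lemma left_image_inn_orbit:
  assumes X: "is_rack X op" and "x \<in> X" "a \<in> X"
  shows "op a ` inn_orbit X op x = inn_orbit X op x"
proof
  show "op a ` inn_orbit X op x \<subseteq> inn_orbit X op x" using inn_orbit.left[OF assms(3)] by blast
  show "inn_orbit X op x \<subseteq> op a ` inn_orbit X op x"
  proof
    fix y assume y: "y \<in> inn_orbit X op x"
    then have "y = op a (inv_into X (op a) y)"
      using rack_left_inv_cancel[OF X assms(3)] inn_orbit_subset[OF X assms(2)] by auto
    then show "y \<in> op a ` inn_orbit X op x" using inn_orbit.left_inv[OF assms(3) y] by blast
  qed
qed

lemma image_Diff_invariant: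
  assumes "bij_betw f X X" "f ` S = S" "S \<subseteq> X" shows "f ` (X - S) = X - S"
proof -
  have "f ` (X - S) = f ` X - f ` S"
    using inj_on_image_set_diff[OF bij_betw_imp_inj_on[OF assms(1)]] assms(3) by blast
  then show ?thesis using bij_betw_imp_surj_on[OF assms(1)] assms(2) by simp
qed

definition rack_decomposition :: "'a set \<Rightarrow> ('a \<Rightarrow> 'a \<Rightarrow> 'a) \<Rightarrow> 'a set \<Rightarrow> 'a set \<Rightarrow> bool" where
  "rack_decomposition X op S T \<longleftrightarrow>
     is_subrack S X op \<and> is_subrack T X op \<and> S \<inter> T = {} \<and> S \<union> T = X"

lemma rack_decomposition_sym: "rack_decomposition X op S T \<Longrightarrow> rack_decomposition X op T S"
  unfolding rack_decomposition_def by auto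

lemma rack_decomposition_subset: "rack_decomposition X op S T \<Longrightarrow> S \<subseteq> X"
  unfolding rack_decomposition_def by auto

lemma rack_decomposition_is_rack: "is_rack X op \<Longrightarrow> rack_decomposition X op S T \<Longrightarrow> is_rack S op"
  unfolding rack_decomposition_def using subrack_is_rack by blast

lemma rack_decomposition_card:
  assumes "finite X" "rack_decomposition X op S T" "T \<noteq> {}" shows "card S < card X"
proof -
  have "S \<subset> X" using assms(2,3) unfolding rack_decomposition_def by auto
  then show ?thesis using assms(1) by (rule psubset_card_mono[rotated])
qed

lemma rack_decomposition_left_image:
  assumes X: "is_rack X op" and d: "rack_decomposition X op S T" and a: "a \<in> X"
  shows "op a ` S = S"
proof (cases "a \<in> S")
  case True
  then show ?thesis using d unfolding rack_decomposition_def is_subrack_def by auto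
next
  case False
  then have "a \<in> T" using d a unfolding rack_decomposition_def by auto
  then have "op a ` T = T" using d unfolding rack_decomposition_def is_subrack_def by auto
  moreover have "S = X - T" "T \<subseteq> X" using d unfolding rack_decomposition_def by auto
  ultimately show ?thesis using image_Diff_invariant[OF rack_left_bij[OF X a]] by simp
qed

lemma rack_decomposition_inn_orbit:
  assumes X: "is_rack X op" and x: "x \<in> X"
  shows "rack_decomposition X op (inn_orbit X op x) (X - inn_orbit X op x)"
proof -
  let ?O = "inn_orbit X op x"
  have O: "?O \<subseteq> X" by (rule inn_orbit_subset[OF X x])
  have "op a ` (X - ?O) = X - ?O" if "a \<in> X" for a
    using image_Diff_invariant[OF rack_left_bij[OF X that] left_image_inn_orbit[OF X x that] O] .
  then show ?thesis
    using O left_image_inn_orbit[OF X x] unfolding rack_decomposition_def is_subrack_def by blast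
qed

lemma not_connected_rack_decomposition:
  assumes "is_rack X op" "X \<noteq> {}" "\<not> connected_rack X op"
  obtains S T where "rack_decomposition X op S T" "S \<noteq> {}" "T \<noteq> {}"
proof -
  obtain x y where "x \<in> X" "y \<in> X" "y \<notin> inn_orbit X op x"
    using assms unfolding connected_rack_def by auto
  then show ?thesis using that rack_decomposition_inn_orbit[OF assms(1)] inn_orbit.base[of x X op] by blast
qed

lemma inn_orbit_subset_piece:
  "is_rack X op \<Longrightarrow> rack_decomposition X op S T \<Longrightarrow> x \<in> S \<Longrightarrow> inn_orbit X op x \<subseteq> S"
  by (metis inn_orbit_subset_invariant rack_decomposition_left_image rack_decomposition_subset)

lemma connected_rack_decomposition:
  assumes "connected_rack X op" "rack_decomposition X op S T" "S \<noteq> {}" shows "T = {}"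
proof -
  obtain s where s: "s \<in> S" using assms(3) by blast
  then have "X \<subseteq> inn_orbit X op s"
    using assms rack_decomposition_subset unfolding connected_rack_def by blast
  also have "\<dots> \<subseteq> S"
    using inn_orbit_subset_piece[OF _ assms(2) s] assms(1) unfolding connected_rack_def by blast
  finally show ?thesis using assms(2) unfolding rack_decomposition_def by auto
qed

lemma connected_subrack_in_piece:
  assumes X: "is_rack X op" and d: "rack_decomposition X op S T"
    and C: "connected_rack C op" "C \<subseteq> X" and z: "z \<in> C" "z \<in> S"
  shows "C \<subseteq> S"
proof -
  have C_rack: "is_rack C op" using C(1) unfolding connected_rack_def by simp
  have S_inv: "op a ` S = S" and T_inv: "op a ` T = T" if "a \<in> C" for a
    using rack_decomposition_left_image[OF X d] rack_decomposition_left_image[OF X rack_decomposition_sym[OF d]]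
      subsetD[OF C(2) that] by simp_all
  have "inn_orbit C op z \<subseteq> S"
  proof
    fix y assume "y \<in> inn_orbit C op z" then show "y \<in> S"
    proof induct
      case base show ?case by (rule z(2))
    next
      case (left a y)
      have "op a y \<in> op a ` S" using left(3) by (rule imageI)
      then show ?case using S_inv[OF left(1)] by simp
    next
      case (left_inv a y)
      let ?w = "inv_into C (op a) y"
      have "y \<in> C" using subsetD[OF inn_orbit_subset[OF C_rack z(1)] left_inv(2)] .
      then have w: "?w \<in> C" "op a ?w = y"
        using rack_left_inv_closed[OF C_rack left_inv(1)] rack_left_inv_cancel[OF C_rack left_inv(1)] by auto
      show "?w \<in> S"
      proof (rule ccontr)
        assume "?w \<notin> S"
        then have "?w \<in> T" using w(1) C(2) d unfolding rack_decomposition_def by auto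
        then have "op a ?w \<in> op a ` T" by (rule imageI)
        then have "y \<in> T" using w(2) T_inv[OF left_inv(1)] by simp
        then show False using left_inv(3) d unfolding rack_decomposition_def by auto
      qed
    qed
  qed
  moreover have "C \<subseteq> inn_orbit C op z" using C(1) z(1) unfolding connected_rack_def by blast
  ultimately show ?thesis by (rule order_trans[rotated])
qed

lemma subrack_Int:
  assumes X: "is_rack X op" and S: "is_subrack S X op" and S': "is_subrack S' X op"
  shows "is_subrack (S \<inter> S') X op"
  unfolding is_subrack_def
proof (intro conjI ballI)
  have sub: "S \<subseteq> X" "S' \<subseteq> X" using S S' unfolding is_subrack_def by auto
  then show "S \<inter> S' \<subseteq> X" by blast
  fix s assume s: "s \<in> S \<inter> S'"
  then have "inj_on (op s) X" using rack_left_inj_on[OF X] sub by blast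
  then have "op s ` (S \<inter> S') = op s ` S \<inter> op s ` S'" using inj_on_image_Int sub by blast
  then show "op s ` (S \<inter> S') = S \<inter> S'" using s S S' unfolding is_subrack_def by auto
qed

lemma subrack_mono: "is_subrack S X op \<Longrightarrow> S \<subseteq> Y \<Longrightarrow> is_subrack S Y op"
  unfolding is_subrack_def by blast

lemma rack_decomposition_Int:
  assumes X: "is_rack X op" and d0: "rack_decomposition X op S0 T0" and d: "rack_decomposition X op S T"
  shows "rack_decomposition S0 op (S0 \<inter> S) (S0 \<inter> T)"
proof -
  have sub: "is_subrack S0 X op" "is_subrack S X op" "is_subrack T X op"
    using d0 d unfolding rack_decomposition_def by auto
  have "is_subrack (S0 \<inter> S) S0 op" by (rule subrack_mono[OF subrack_Int[OF X sub(1,2)]]) blast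
  moreover have "is_subrack (S0 \<inter> T) S0 op" by (rule subrack_mono[OF subrack_Int[OF X sub(1,3)]]) blast
  moreover have "S0 \<subseteq> X" using d0 by (rule rack_decomposition_subset)
  ultimately show ?thesis using d unfolding rack_decomposition_def by blast
qed

section \<open>Classes of permutation sets in \<open>B(\<int>)\<close>\<close>

lemma bz_rel_uminus: "u \<in> bz_rel \<Longrightarrow> - u \<in> bz_rel"
  using bz_rel.diff[OF bz_rel.zero] by fastforce

lemma bz_rel_add: "u \<in> bz_rel \<Longrightarrow> v \<in> bz_rel \<Longrightarrow> u + v \<in> bz_rel"
  using bz_rel.diff[OF _ bz_rel_uminus] by fastforce

lemma bz_rel_frag_extend: "(\<And>b. F b \<in> bz_rel) \<Longrightarrow> frag_extend F v \<in> bz_rel"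
proof -
  assume F: "\<And>b. F b \<in> bz_rel"
  have "frag_cmul k u \<in> bz_rel" if "u \<in> bz_rel" for k u
    by (rule frag_closure_minus_cmul[where P = "\<lambda>x. x \<in> bz_rel"]) (use that in \<open>auto intro: bz_rel.intros\<close>)
  moreover have "sum f I \<in> bz_rel" if "finite I" "\<And>i. f i \<in> bz_rel" for f and I :: "'a set"
    using that by (induction I rule: finite_induct) (auto intro: bz_rel_add bz_rel.zero)
  ultimately show ?thesis unfolding frag_extend_def using F by simp
qed

lemma abs_bz_eq_iff: "abs_bz u = abs_bz v \<longleftrightarrow> u - v \<in> bz_rel"
  by (simp add: bz.abs_eq_iff bz_eq_def)

lemma rep_bz_abs_bz: "rep_bz (abs_bz u) - u \<in> bz_rel"
  using Quotient3_rep_abs[OF Quotient3_bz, of u] by (simp add: bz_eq_def bz_rel.zero)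

lemma abs_bz_add: "abs_bz u + abs_bz v = abs_bz (u + v)"
proof -
  have "(rep_bz (abs_bz u) + rep_bz (abs_bz v)) - (u + v)
      = (rep_bz (abs_bz u) - u) + (rep_bz (abs_bz v) - v)" by simp
  then show ?thesis
    unfolding plus_bz_def abs_bz_eq_iff by (metis bz_rel_add rep_bz_abs_bz)
qed

instance bz :: comm_monoid_add
proof
  fix x y z :: bz
  show "x + y + z = x + (y + z)"
    by (induct x rule: bz.abs_induct, induct y rule: bz.abs_induct, induct z rule: bz.abs_induct)
       (simp add: abs_bz_add add.assoc)
  show "x + y = y + x"
    by (induct x rule: bz.abs_induct, induct y rule: bz.abs_induct) (simp add: abs_bz_add add.commute)
  show "0 + x = x"
    by (induct x rule: bz.abs_induct) (simp add: zero_bz_def abs_bz_add)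
qed

lemma bz_sum_eq_sum: "bz_sum f N = (\<Sum>n\<in>{1..N}. f n)"
proof (induction N)
  case (Suc N)
  have "{1..Suc N} = insert (Suc N) {1..N}" by auto
  then show ?case using Suc by (simp add: add.commute)
qed simp

lemma bz_nsmul_Suc: "bz_nsmul (Suc k) x = x + bz_nsmul k x"
  by (simp add: bz_nsmul_def)

lemma bz_nsmul_0: "bz_nsmul 0 x = 0"
  by (simp add: bz_nsmul_def)

text \<open>Making \<open>f\<close> the identity outside \<open>X\<close> turns any bijection of a finite \<open>X\<close> into a
  valid \<open>pcode\<close>; the values of \<open>f\<close> outside \<open>X\<close> are irrelevant.\<close>
definition perm_gen :: "nat set \<Rightarrow> (nat \<Rightarrow> nat) \<Rightarrow> pcode \<Rightarrow>\<^sub>0 int" where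
  "perm_gen X f = frag_of (Abs_pcode (X, perm_restrict f X))"

definition perm_class :: "nat set \<Rightarrow> (nat \<Rightarrow> nat) \<Rightarrow> bz" where
  "perm_class X f = abs_bz (perm_gen X f)"

lemma perm_restrict_permutes: "bij_betw f X X \<Longrightarrow> perm_restrict f X permutes X"
  by (rule bij_imp_permutes) (auto simp: perm_restrict_def bij_betw_def inj_on_def)

lemma Rep_pcode_perm_restrict:
  "finite X \<Longrightarrow> bij_betw f X X \<Longrightarrow> Rep_pcode (Abs_pcode (X, perm_restrict f X)) = (X, perm_restrict f X)"
  by (rule Abs_pcode_inverse) (simp add: perm_restrict_permutes)

lemma perm_gen_cong: "(\<And>x. x \<in> X \<Longrightarrow> f x = g x) \<Longrightarrow> perm_gen X f = perm_gen X g"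
proof -
  assume "\<And>x. x \<in> X \<Longrightarrow> f x = g x"
  then have "perm_restrict f X = perm_restrict g X" by (auto simp: perm_restrict_def fun_eq_iff)
  then show ?thesis by (simp add: perm_gen_def)
qed

lemma perm_class_cong:
  assumes "\<And>x. x \<in> X \<Longrightarrow> f x = g x" shows "perm_class X f = perm_class X g"
  unfolding perm_class_def using perm_gen_cong[OF assms] by simp

lemma Rep_pcode_perm_gen:
  assumes "Rep_pcode A = (X, \<pi>)"
  shows "frag_of A = perm_gen X \<pi>" and "finite X" and "bij_betw \<pi> X X"
proof -
  have "finite X" "\<pi> permutes X" using Rep_pcode[of A] assms by auto
  moreover have "perm_restrict \<pi> X = \<pi>"
    using \<open>\<pi> permutes X\<close> by (auto simp: perm_restrict_def fun_eq_iff permutes_not_in)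
  moreover have "A = Abs_pcode (X, \<pi>)" using assms by (metis Rep_pcode_inverse)
  ultimately show "frag_of A = perm_gen X \<pi>" "finite X" "bij_betw \<pi> X X"
    by (simp_all add: perm_gen_def permutes_imp_bij)
qed

lemma pcode_perm_gen:
  obtains X \<pi> where "frag_of A = perm_gen X \<pi>" "finite X" "bij_betw \<pi> X X"
  using Rep_pcode_perm_gen by (metis surj_pair)

lemma perm_iso_refl: "perm_iso X f X f"
  unfolding perm_iso_def by (rule exI[of _ id]) simp

lemma perm_iso_trans: assumes "perm_iso X f Y g" "perm_iso Y g Z k" shows "perm_iso X f Z k"
proof -
  obtain h1 h2 where h: "bij_betw h1 X Y" "\<forall>x\<in>X. h1 (f x) = g (h1 x)"
    "bij_betw h2 Y Z" "\<forall>y\<in>Y. h2 (g y) = k (h2 y)"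
    using assms unfolding perm_iso_def by blast
  then have "\<forall>x\<in>X. (h2 \<circ> h1) (f x) = k ((h2 \<circ> h1) x)" by (auto dest: bij_betwE)
  then show ?thesis using bij_betw_trans[OF h(1,3)] unfolding perm_iso_def by blast
qed

lemma perm_iso_sym: assumes "perm_iso X f Y g" "f ` X \<subseteq> X" shows "perm_iso Y g X f"
proof -
  obtain h where h: "bij_betw h X Y" "\<forall>x\<in>X. h (f x) = g (h x)" using assms unfolding perm_iso_def by blast
  have "inv_into X h (g y) = f (inv_into X h y)" if y: "y \<in> Y" for y
  proof -
    obtain x where x: "x \<in> X" "y = h x" using y h(1) bij_betw_imp_surj_on by blast
    have "inv_into X h y = x" using x h(1) by (simp add: bij_betw_imp_inj_on)
    moreover have "inv_into X h (g y) = f x"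
      using x h assms(2) by (metis bij_betw_imp_inj_on image_subset_iff inv_into_f_f)
    ultimately show ?thesis by simp
  qed
  then show ?thesis using bij_betw_inv_into[OF h(1)] unfolding perm_iso_def by blast
qed

lemma perm_iso_cong:
  "perm_iso X f Y g \<Longrightarrow> (\<And>x. x \<in> X \<Longrightarrow> f x = f' x) \<Longrightarrow> (\<And>y. y \<in> Y \<Longrightarrow> g y = g' y) \<Longrightarrow>
    perm_iso X f' Y g'"
  unfolding perm_iso_def by (metis bij_betwE)

lemma perm_class_iso:
  assumes "finite X" "finite Y" "bij_betw f X X" "bij_betw g Y Y" "perm_iso X f Y g"
  shows "perm_class X f = perm_class Y g"
proof -
  have "perm_iso X (perm_restrict f X) Y (perm_restrict g Y)"
    using assms(5) by (rule perm_iso_cong) (simp_all add: perm_restrict_def)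
  then have "perm_gen X f - perm_gen Y g \<in> bz_rel"
    unfolding perm_gen_def
    by (rule bz_rel.iso[OF Rep_pcode_perm_restrict[OF assms(1,3)] Rep_pcode_perm_restrict[OF assms(2,4)]])
  then show ?thesis unfolding perm_class_def abs_bz_eq_iff .
qed

lemma perm_gen_decomposition:
  assumes X: "finite X" "bij_betw f X X" and S: "f ` S = S" "S \<subseteq> X"
  shows "perm_gen X f - perm_gen S f - perm_gen (X - S) f \<in> bz_rel"
proof -
  let ?T = "X - S"
  have T: "f ` ?T = ?T"
    using inj_on_image_set_diff[OF bij_betw_imp_inj_on[OF X(2)]] bij_betw_imp_surj_on[OF X(2)] S by auto
  have "inj_on f S" "inj_on f ?T" using bij_betw_imp_inj_on[OF X(2)] S(2) inj_on_subset by blast+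
  then have bij: "bij_betw f S S" "bij_betw f ?T ?T" using S(1) T by (auto simp: bij_betw_def)
  have fin: "finite S" "finite ?T" using X(1) S(2) finite_subset by auto
  have "perm_restrict f X ` A = f ` A" if "A \<subseteq> X" for A
    using that by (intro image_cong) (auto simp: perm_restrict_def)
  then have img: "perm_restrict f X ` S = S" "perm_restrict f X ` ?T = ?T" using S T by auto
  have eq: "(\<lambda>x. if x \<in> A then perm_restrict f X x else x) = perm_restrict f A" if "A \<subseteq> X" for A
    using that by (auto simp: perm_restrict_def fun_eq_iff)
  show ?thesis
    unfolding perm_gen_def
    by (rule bz_rel.dec[OF Rep_pcode_perm_restrict[OF X], where S = S and T = ?T])
       (simp_all only: eq[OF S(2)] eq[OF Diff_subset] img Rep_pcode_perm_restrict[OF fin(1) bij(1)]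
          Rep_pcode_perm_restrict[OF fin(2) bij(2)], use S(2) in auto)
qed

lemma perm_class_decomposition:
  "finite X \<Longrightarrow> bij_betw f X X \<Longrightarrow> f ` S = S \<Longrightarrow> S \<subseteq> X \<Longrightarrow>
    perm_class X f = perm_class S f + perm_class (X - S) f"
  unfolding perm_class_def abs_bz_add abs_bz_eq_iff by (drule (3) perm_gen_decomposition) (simp add: diff_diff_eq)

lemma perm_class_empty: "perm_class {} f = 0"
proof -
  have "perm_gen {} f - perm_gen {} f - perm_gen {} f \<in> bz_rel"
    using perm_gen_decomposition[of "{}" f "{}"] by (simp add: bij_betw_def)
  then have "- (- perm_gen {} f) \<in> bz_rel" using bz_rel_uminus by fastforce
  then show ?thesis unfolding perm_class_def zero_bz_def abs_bz_eq_iff by simp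
qed

section \<open>Cycle decomposition\<close>

lemma cyc_eq_perm_class: "cyc n = perm_class {0..<n} (\<lambda>i. Suc i mod n)"
proof -
  have "perm_restrict (\<lambda>i. Suc i mod n) {0..<n} = (\<lambda>i. if i < n then (i + 1) mod n else i)"
    by (auto simp: perm_restrict_def fun_eq_iff)
  then show ?thesis by (simp add: cyc_def b_perm_def perm_class_def perm_gen_def)
qed

lemma bij_betw_Suc_mod: "bij_betw (\<lambda>i. Suc i mod n) {0..<n} {0..<n}"
proof -
  have "inj_on (\<lambda>i. Suc i mod n) {0..<n}"
  proof (rule inj_onI)
    fix i j assume "i \<in> {0..<n}" "j \<in> {0..<n}" "Suc i mod n = Suc j mod n"
    then show "i = j" by (cases "Suc i = n"; cases "Suc j = n") auto
  qed
  moreover have "(\<lambda>i. Suc i mod n) ` {0..<n} \<subseteq> {0..<n}" by auto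
  ultimately show ?thesis using endo_inj_surj[of "{0..<n}"] by (simp add: bij_betw_def)
qed

lemma perm_iso_cycle_orbit:
  assumes "permutation \<sigma>"
  shows "perm_iso {0..<card (orbit \<sigma> y)} (\<lambda>i. Suc i mod card (orbit \<sigma> y)) (orbit \<sigma> y) \<sigma>"
proof -
  have y: "y \<in> orbit \<sigma> y" by (rule permutation_self_in_orbit[OF assms])
  define p where "p = funpow_dist1 \<sigma> y y"
  define h where "h n = (\<sigma> ^^ n) y" for n
  have bij: "bij_betw h {0..<p} (orbit \<sigma> y)"
    unfolding bij_betw_def h_def p_def using inj_on_funpow_dist1[OF y] orbit_conv_funpow_dist1[OF y] by simp
  then have card: "card (orbit \<sigma> y) = p" using bij_betw_same_card by fastforce
  have "h (Suc i mod p) = \<sigma> (h i)" if "i < p" for i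
  proof (cases "Suc i = p")
    case True
    have "\<sigma> (h i) = (\<sigma> ^^ p) y" unfolding h_def True[symmetric] by simp
    then show ?thesis using funpow_dist1_prop[OF y, folded p_def] True by (simp add: h_def)
  qed (use that in \<open>simp add: h_def\<close>)
  then show ?thesis using bij unfolding card perm_iso_def by auto
qed

lemma image_orbit_permutation: "permutation \<sigma> \<Longrightarrow> \<sigma> ` orbit \<sigma> y = orbit \<sigma> y"
proof (rule endo_inj_surj)
  assume "permutation \<sigma>"
  then show "finite (orbit \<sigma> y)" by (simp add: finite_orbit permutation_self_in_orbit)
  show "\<sigma> ` orbit \<sigma> y \<subseteq> orbit \<sigma> y" by (auto intro: orbit.step)
  show "inj_on \<sigma> (orbit \<sigma> y)"
    by (rule inj_on_subset[OF bij_is_inj[OF permutation_bijective[OF \<open>permutation \<sigma>\<close>]]]) simp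
qed

lemma perm_class_orbit:
  assumes "permutation \<sigma>" shows "perm_class (orbit \<sigma> y) \<sigma> = cyc (card (orbit \<sigma> y))"
proof -
  have "inj_on \<sigma> (orbit \<sigma> y)"
    by (rule inj_on_subset[OF bij_is_inj[OF permutation_bijective[OF assms]]]) simp
  then have "bij_betw \<sigma> (orbit \<sigma> y) (orbit \<sigma> y)"
    using image_orbit_permutation[OF assms] by (simp add: bij_betw_def)
  then show ?thesis
    unfolding cyc_eq_perm_class
    by (intro perm_class_iso[symmetric] bij_betw_Suc_mod perm_iso_cycle_orbit[OF assms])
       (simp_all add: finite_orbit permutation_self_in_orbit assms)
qed

lemma orbit_subset_invariant:
  assumes "f ` X \<subseteq> X" "y \<in> X" shows "orbit f y \<subseteq> X"
proof
  fix z assume "z \<in> orbit f y" then show "z \<in> X" by induct (use assms in auto)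
qed

lemma orbit_eq_of_mem: "permutation \<sigma> \<Longrightarrow> z \<in> orbit \<sigma> y \<Longrightarrow> orbit \<sigma> z = orbit \<sigma> y"
  by (metis cyclic_on_orbit' orbit_cyclic_eq3)

lemma num_cycles_Diff_orbit:
  assumes "permutation \<sigma>" "finite X" "y \<in> X"
  shows "num_cycles n \<sigma> X
    = num_cycles n \<sigma> (X - orbit \<sigma> y) + (if n = card (orbit \<sigma> y) then 1 else 0)"
proof -
  let ?C = "orbit \<sigma> y"
  define A where "A = {D. \<exists>z\<in>X - ?C. D = orbit \<sigma> z \<and> card D = n}"
  have "{D. \<exists>z\<in>X. D = orbit \<sigma> z \<and> card D = n} = A \<union> (if n = card ?C then {?C} else {})"
  proof (intro set_eqI iffI)
    fix D assume "D \<in> {D. \<exists>z\<in>X. D = orbit \<sigma> z \<and> card D = n}"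
    then obtain z where "z \<in> X" "D = orbit \<sigma> z" "card D = n" by blast
    then show "D \<in> A \<union> (if n = card ?C then {?C} else {})"
      using orbit_eq_of_mem[OF assms(1), of z y] unfolding A_def by (cases "z \<in> ?C") auto
  qed (use assms(3) in \<open>auto simp: A_def split: if_splits\<close>)
  moreover have "?C \<notin> A" using permutation_self_in_orbit[OF assms(1)] unfolding A_def by auto
  moreover have "finite A"
    using assms(2) unfolding A_def by (auto intro: finite_subset[of _ "orbit \<sigma> ` X"])
  ultimately show ?thesis unfolding num_cycles_def A_def[symmetric] by simp
qed

theorem perm_class_cycle_decomposition:
  assumes "finite X" "permutation \<sigma>" "\<sigma> ` X = X" "card X \<le> N"
  shows "perm_class X \<sigma> = (\<Sum>n\<in>{1..N}. bz_nsmul (num_cycles n \<sigma> X) (cyc n))"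
  using assms(1,3,4)
proof (induction "card X" arbitrary: X rule: less_induct)
  case less
  show ?case
  proof (cases "X = {}")
    case True
    then show ?thesis by (simp add: perm_class_empty num_cycles_def bz_nsmul_0)
  next
    case False
    then obtain y where y: "y \<in> X" by blast
    define C where "C = orbit \<sigma> y"
    have inj: "inj \<sigma>" by (rule bij_is_inj[OF permutation_bijective[OF assms(2)]])
    have C: "C \<subseteq> X" "\<sigma> ` C = C" "y \<in> C"
      unfolding C_def using orbit_subset_invariant[of \<sigma> X y] less.prems(2) y
        image_orbit_permutation[OF assms(2)] permutation_self_in_orbit[OF assms(2)] by auto
    have "1 \<le> card C" "card C \<le> N"
      using C less.prems(1,3) card_mono[OF less.prems(1) C(1)] finite_subset[OF C(1)]
      by (auto simp: Suc_le_eq card_gt_0_iff)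
    then have sum_C: "(\<Sum>n\<in>{1..N}. if n = card C then cyc n else 0) = cyc (card C)" by simp
    have rest: "\<sigma> ` (X - C) = X - C" using C(2) less.prems(2) by (simp add: image_set_diff[OF inj])
    have "card (X - C) < card X" using C(1,3) less.prems(1) by (intro psubset_card_mono) auto
    then have IH: "perm_class (X - C) \<sigma> = (\<Sum>n\<in>{1..N}. bz_nsmul (num_cycles n \<sigma> (X - C)) (cyc n))"
      using less.hyps[OF _ _ rest] less.prems(1,3) by simp
    have "perm_class X \<sigma> = perm_class C \<sigma> + perm_class (X - C) \<sigma>"
      using perm_class_decomposition[OF less.prems(1) _ C(2,1)] less.prems(2) inj
      by (simp add: bij_betw_def inj_on_subset)
    also have "perm_class C \<sigma> = cyc (card C)" unfolding C_def by (rule perm_class_orbit[OF assms(2)])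
    also have "perm_class (X - C) \<sigma> = (\<Sum>n\<in>{1..N}. bz_nsmul (num_cycles n \<sigma> (X - C)) (cyc n))"
      by (rule IH)
    also have "cyc (card C) + \<dots>
        = (\<Sum>n\<in>{1..N}. (if n = card C then cyc n else 0) + bz_nsmul (num_cycles n \<sigma> (X - C)) (cyc n))"
      unfolding sum.distrib sum_C ..
    also have "\<dots> = (\<Sum>n\<in>{1..N}. bz_nsmul (num_cycles n \<sigma> X) (cyc n))"
      by (rule sum.cong)
         (simp_all add: num_cycles_Diff_orbit[OF assms(2) less.prems(1) y] C_def[symmetric] bz_nsmul_Suc)
    finally show ?thesis .
  qed
qed

section \<open>The additive map on finite racks\<close>

lemma finite_rack_induct [consumes 2, case_names empty connected decomposition]:
  assumes "finite X" "is_rack X op"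
    and empty: "P {}"
    and connected: "\<And>X. finite X \<Longrightarrow> connected_rack X op \<Longrightarrow> P X"
    and decomposition: "\<And>X S T. finite X \<Longrightarrow> is_rack X op \<Longrightarrow> rack_decomposition X op S T \<Longrightarrow>
      S \<noteq> {} \<Longrightarrow> T \<noteq> {} \<Longrightarrow> P S \<Longrightarrow> P T \<Longrightarrow> P X"
  shows "P X"
  using assms(1,2)
proof (induction "card X" arbitrary: X rule: less_induct)
  case less
  show ?case
  proof (cases "X = {} \<or> connected_rack X op")
    case True
    then show ?thesis using empty connected less.prems(1) by blast
  next
    case False
    then obtain S T where d: "rack_decomposition X op S T" "S \<noteq> {}" "T \<noteq> {}"
      using not_connected_rack_decomposition[OF less.prems(2)] by blast
    have d': "rack_decomposition X op T S" by (rule rack_decomposition_sym[OF d(1)])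
    have "P S"
      using less.hyps[OF rack_decomposition_card[OF less.prems(1) d(1,3)]]
        finite_subset[OF rack_decomposition_subset[OF d(1)] less.prems(1)]
        rack_decomposition_is_rack[OF less.prems(2) d(1)] by blast
    moreover have "P T"
      using less.hyps[OF rack_decomposition_card[OF less.prems(1) d' d(2)]]
        finite_subset[OF rack_decomposition_subset[OF d'] less.prems(1)]
        rack_decomposition_is_rack[OF less.prems(2) d'] by blast
    ultimately show ?thesis by (rule decomposition[OF less.prems d])
  qed
qed

lemma perm_iso_left_conj:
  assumes X: "is_rack X op" and "a \<in> X" "y \<in> X"
  shows "perm_iso X (op y) X (op (op a y))"
  unfolding perm_iso_def
  by (rule exI[of _ "op a"]) (use assms in \<open>simp add: rack_left_bij rack_left_distrib\<close>)

lemma perm_iso_left_inn_orbit: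
  assumes X: "is_rack X op" and c: "c \<in> X" and "d \<in> inn_orbit X op c"
  shows "perm_iso X (op c) X (op d)"
  using assms(3)
proof induct
  case base
  show ?case by (rule perm_iso_refl)
next
  case (left a y)
  have "y \<in> X" using subsetD[OF inn_orbit_subset[OF X c] left(2)] .
  then show ?case using perm_iso_trans[OF left(3) perm_iso_left_conj[OF X left(1)]] by simp
next
  case (left_inv a y)
  let ?y' = "inv_into X (op a) y"
  have "y \<in> X" using subsetD[OF inn_orbit_subset[OF X c] left_inv(2)] .
  then have y': "?y' \<in> X" "op a ?y' = y"
    using rack_left_inv_closed[OF X left_inv(1)] rack_left_inv_cancel[OF X left_inv(1)] by auto
  have "perm_iso X (op ?y') X (op y)" using perm_iso_left_conj[OF X left_inv(1) y'(1)] y'(2) by simp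
  then have "perm_iso X (op y) X (op ?y')"
    by (rule perm_iso_sym) (simp add: rack_left_image[OF X y'(1)])
  then show ?case by (rule perm_iso_trans[OF left_inv(3)])
qed

lemma perm_class_left_connected:
  assumes "finite X" "connected_rack X op" "a \<in> X" "b \<in> X"
  shows "perm_class X (op a) = perm_class X (op b)"
proof -
  have X: "is_rack X op" using assms(2) unfolding connected_rack_def by simp
  have "b \<in> inn_orbit X op a" using assms(2-4) unfolding connected_rack_def by blast
  then show ?thesis
    using perm_class_iso[OF assms(1,1) rack_left_bij[OF X assms(3)] rack_left_bij[OF X assms(4)]]
      perm_iso_left_inn_orbit[OF X assms(3)] by blast
qed

definition some_decomposition :: "nat set \<Rightarrow> (nat \<Rightarrow> nat \<Rightarrow> nat) \<Rightarrow> nat set \<times> nat set" where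
  "some_decomposition X op =
     (SOME ST. rack_decomposition X op (fst ST) (snd ST) \<and> fst ST \<noteq> {} \<and> snd ST \<noteq> {})"

lemma rack_decomposition_some_decomposition:
  assumes "is_rack X op" "X \<noteq> {}" "\<not> connected_rack X op"
  shows "rack_decomposition X op (fst (some_decomposition X op)) (snd (some_decomposition X op))"
    and "fst (some_decomposition X op) \<noteq> {}" and "snd (some_decomposition X op) \<noteq> {}"
proof -
  obtain S T where "rack_decomposition X op S T" "S \<noteq> {}" "T \<noteq> {}"
    using not_connected_rack_decomposition[OF assms] by blast
  then have "\<exists>ST. rack_decomposition X op (fst ST) (snd ST) \<and> fst ST \<noteq> {} \<and> snd ST \<noteq> {}"
    by (intro exI[of _ "(S, T)"]) simp
  from someI_ex[OF this]
  show "rack_decomposition X op (fst (some_decomposition X op)) (snd (some_decomposition X op))"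
    and "fst (some_decomposition X op) \<noteq> {}" and "snd (some_decomposition X op) \<noteq> {}"
    unfolding some_decomposition_def by simp_all
qed

text \<open>Splits a finite rack along an arbitrarily chosen decomposition until connected pieces
  are reached; by \<open>lambda_rack_decomposition\<close> the choices do not matter in \<open>B(\<int>)\<close>.\<close>
function lambda_gen :: "nat set \<Rightarrow> (nat \<Rightarrow> nat \<Rightarrow> nat) \<Rightarrow> pcode \<Rightarrow>\<^sub>0 int" where
  "lambda_gen X op =
    (if finite X \<and> is_rack X op \<and> X \<noteq> {} then
       if connected_rack X op then perm_gen X (op (SOME c. c \<in> X))
       else lambda_gen (fst (some_decomposition X op)) op + lambda_gen (snd (some_decomposition X op)) op
     else 0)"
  by pat_completeness auto
termination
proof (relation "measure (\<lambda>(X, op). card X)")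
  fix X :: "nat set" and op
  assume X: "finite X \<and> is_rack X op \<and> X \<noteq> {}" and nc: "\<not> connected_rack X op"
  note d = rack_decomposition_some_decomposition[of X op]
  show "((fst (some_decomposition X op), op), X, op) \<in> measure (\<lambda>(X, op). card X)"
    using rack_decomposition_card[OF _ d(1) d(3)] X nc by simp
  show "((snd (some_decomposition X op), op), X, op) \<in> measure (\<lambda>(X, op). card X)"
    using rack_decomposition_card[OF _ rack_decomposition_sym[OF d(1)] d(2)] X nc by simp
qed simp

declare lambda_gen.simps [simp del]

definition lambda_rack :: "nat set \<Rightarrow> (nat \<Rightarrow> nat \<Rightarrow> nat) \<Rightarrow> bz" where
  "lambda_rack X op = abs_bz (lambda_gen X op)"

lemma lambda_rack_empty [simp]: "lambda_rack {} op = 0"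
  unfolding lambda_rack_def zero_bz_def by (subst lambda_gen.simps) simp

lemma lambda_rack_connected:
  assumes "finite X" "connected_rack X op" "c \<in> X"
  shows "lambda_rack X op = perm_class X (op c)"
proof -
  have "lambda_gen X op = perm_gen X (op (SOME c. c \<in> X))"
    using assms by (subst lambda_gen.simps) (simp add: connected_rack_def)
  moreover have "(SOME c. c \<in> X) \<in> X" using assms(3) by (rule someI)
  ultimately show ?thesis
    using perm_class_left_connected[OF assms(1,2) _ assms(3)] by (simp add: lambda_rack_def perm_class_def)
qed

lemma lambda_rack_split:
  assumes "finite X" "is_rack X op" "X \<noteq> {}" "\<not> connected_rack X op"
  obtains S T where "rack_decomposition X op S T" "S \<noteq> {}" "T \<noteq> {}"
    "lambda_rack X op = lambda_rack S op + lambda_rack T op"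
proof -
  have "lambda_gen X op
      = lambda_gen (fst (some_decomposition X op)) op + lambda_gen (snd (some_decomposition X op)) op"
    using assms by (subst lambda_gen.simps) simp
  then show ?thesis
    using that rack_decomposition_some_decomposition[OF assms(2-4)] by (simp add: lambda_rack_def abs_bz_add)
qed

lemma lambda_rack_decomposition:
  assumes "finite X" "is_rack X op" "rack_decomposition X op S T"
  shows "lambda_rack X op = lambda_rack S op + lambda_rack T op"
  using assms
proof (induction "card X" arbitrary: X S T rule: less_induct)
  case less
  note X = less.prems(1,2) and d = less.prems(3)
  show ?case
  proof (cases "S = {} \<or> T = {}")
    case True
    then show ?thesis using d unfolding rack_decomposition_def by auto
  next
    case False
    then have ne: "S \<noteq> {}" "T \<noteq> {}" by auto
    then have "X \<noteq> {}" "\<not> connected_rack X op"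
      using connected_rack_decomposition[OF _ d] rack_decomposition_subset[OF d] by auto
    then obtain S0 T0 where d0: "rack_decomposition X op S0 T0" "S0 \<noteq> {}" "T0 \<noteq> {}"
      and split: "lambda_rack X op = lambda_rack S0 op + lambda_rack T0 op"
      by (rule lambda_rack_split[OF X])
    have refine: "lambda_rack P op = lambda_rack (P \<inter> S') op + lambda_rack (P \<inter> T') op"
      if P: "rack_decomposition X op P Q" "Q \<noteq> {}" and d': "rack_decomposition X op S' T'" for P Q S' T'
      by (rule less.hyps[OF rack_decomposition_card[OF X(1) P]
            finite_subset[OF rack_decomposition_subset[OF P(1)] X(1)]
            rack_decomposition_is_rack[OF X(2) P(1)] rack_decomposition_Int[OF X(2) P(1) d']])
    have "lambda_rack X op
        = (lambda_rack (S0 \<inter> S) op + lambda_rack (S0 \<inter> T) op)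
        + (lambda_rack (T0 \<inter> S) op + lambda_rack (T0 \<inter> T) op)"
      unfolding split refine[OF d0(1,3) d] refine[OF rack_decomposition_sym[OF d0(1)] d0(2) d] ..
    also have "\<dots> = (lambda_rack (S \<inter> S0) op + lambda_rack (S \<inter> T0) op)
        + (lambda_rack (T \<inter> S0) op + lambda_rack (T \<inter> T0) op)"
      by (simp add: Int_commute ac_simps)
    also have "\<dots> = lambda_rack S op + lambda_rack T op"
      unfolding refine[OF d ne(2) d0(1)] refine[OF rack_decomposition_sym[OF d] ne(1) d0(1)] ..
    finally show ?thesis .
  qed
qed

locale rack_isomorphism =
  fixes X :: "'a set" and op :: "'a \<Rightarrow> 'a \<Rightarrow> 'a" and Y :: "'b set" and op' :: "'b \<Rightarrow> 'b \<Rightarrow> 'b"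
    and h :: "'a \<Rightarrow> 'b"
  assumes rack_X: "is_rack X op" and rack_Y: "is_rack Y op'" and bij: "bij_betw h X Y"
    and hom: "\<And>a b. a \<in> X \<Longrightarrow> b \<in> X \<Longrightarrow> h (op a b) = op' (h a) (h b)"
begin

lemma mem_Y: "x \<in> X \<Longrightarrow> h x \<in> Y"
  using bij bij_betwE by blast

lemma finite_Y: "finite X \<Longrightarrow> finite Y"
  using bij bij_betw_finite by blast

lemma image_inv_into:
  assumes "a \<in> X" "y \<in> X"
  shows "h (inv_into X (op a) y) = inv_into Y (op' (h a)) (h y)"
proof -
  let ?w = "inv_into X (op a) y"
  have w: "?w \<in> X" "op a ?w = y"
    using rack_left_inv_closed[OF rack_X assms] rack_left_inv_cancel[OF rack_X assms] by auto
  have "op' (h a) (h ?w) = h y" using hom[OF assms(1) w(1)] w(2) by simp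
  then show ?thesis
    by (intro inv_into_f_eq[symmetric] rack_left_inj_on[OF rack_Y] mem_Y assms(1) w(1))
qed

lemma image_inn_orbit:
  assumes x: "x \<in> X" and "y \<in> inn_orbit X op x"
  shows "h y \<in> inn_orbit Y op' (h x)"
  using assms(2)
proof induct
  case base
  show ?case by (rule inn_orbit.base)
next
  case (left a y)
  have "h (op a y) = op' (h a) (h y)"
    using hom[OF left(1) subsetD[OF inn_orbit_subset[OF rack_X x] left(2)]] .
  then show ?case using inn_orbit.left[OF mem_Y[OF left(1)] left(3)] by simp
next
  case (left_inv a y)
  have "h (inv_into X (op a) y) = inv_into Y (op' (h a)) (h y)"
    using image_inv_into[OF left_inv(1) subsetD[OF inn_orbit_subset[OF rack_X x] left_inv(2)]] .
  then show ?case using inn_orbit.left_inv[OF mem_Y[OF left_inv(1)] left_inv(3)] by simp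
qed

lemma connected_rack_image: "connected_rack X op \<Longrightarrow> connected_rack Y op'"
  unfolding connected_rack_def
proof (intro conjI ballI)
  assume X: "is_rack X op \<and> X \<noteq> {} \<and> (\<forall>x\<in>X. \<forall>y\<in>X. y \<in> inn_orbit X op x)"
  show "is_rack Y op'" by (rule rack_Y)
  show "Y \<noteq> {}" using X bij unfolding bij_betw_def by auto
  fix y1 y2 assume "y1 \<in> Y" "y2 \<in> Y"
  then obtain x1 x2 where "x1 \<in> X" "x2 \<in> X" "y1 = h x1" "y2 = h x2"
    using bij_betw_imp_surj_on[OF bij] by blast
  then show "y2 \<in> inn_orbit Y op' y1" using X image_inn_orbit by blast
qed

lemma subrack_image:
  assumes S: "is_subrack S X op" shows "is_subrack (h ` S) Y op'"
  unfolding is_subrack_def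
proof (intro conjI ballI)
  have SX: "S \<subseteq> X" using S unfolding is_subrack_def by simp
  then show "h ` S \<subseteq> Y" using mem_Y by blast
  fix t assume "t \<in> h ` S"
  then obtain s where s: "s \<in> S" "t = h s" by blast
  have "op' (h s) ` h ` S = (\<lambda>x. h (op s x)) ` S"
    unfolding image_image using hom s(1) SX by (intro image_cong) (auto simp: subsetD)
  also have "\<dots> = h ` S" using S s(1) unfolding is_subrack_def by (simp add: image_image[symmetric])
  finally show "op' t ` h ` S = h ` S" using s(2) by simp
qed

lemma rack_decomposition_image:
  assumes d: "rack_decomposition X op S T"
  shows "rack_decomposition Y op' (h ` S) (h ` T)"
proof -
  have "is_subrack S X op" "is_subrack T X op" "S \<inter> T = {}" "S \<union> T = X"
    using d unfolding rack_decomposition_def by auto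
  moreover have "h ` S \<inter> h ` T = {}"
    using inj_on_image_Int[OF bij_betw_imp_inj_on[OF bij]] calculation(3,4) by (metis Un_upper1 Un_upper2 image_empty)
  moreover have "h ` S \<union> h ` T = Y" using calculation(4) bij_betw_imp_surj_on[OF bij] by (simp add: image_Un[symmetric])
  ultimately show ?thesis unfolding rack_decomposition_def using subrack_image by blast
qed

lemma restrict:
  assumes S: "is_subrack S X op" shows "rack_isomorphism S op (h ` S) op' h"
proof
  have SX: "S \<subseteq> X" using S unfolding is_subrack_def by simp
  show "is_rack S op" by (rule subrack_is_rack[OF rack_X S])
  show "is_rack (h ` S) op'" by (rule subrack_is_rack[OF rack_Y subrack_image[OF S]])
  show "bij_betw h S (h ` S)" by (rule inj_on_imp_bij_betw[OF inj_on_subset[OF bij_betw_imp_inj_on[OF bij] SX]])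
  show "h (op a b) = op' (h a) (h b)" if "a \<in> S" "b \<in> S" for a b using hom that SX by blast
qed

end

lemma perm_class_left_iso:
  assumes "rack_isomorphism X op Y op' h" "finite X" "c \<in> X"
  shows "perm_class X (op c) = perm_class Y (op' (h c))"
proof -
  interpret rack_isomorphism X op Y op' h by (rule assms(1))
  show ?thesis
  proof (rule perm_class_iso)
    show "perm_iso X (op c) Y (op' (h c))" unfolding perm_iso_def using bij hom assms(3) by blast
  qed (use assms(2,3) finite_Y rack_left_bij[OF rack_X] rack_left_bij[OF rack_Y mem_Y] in auto)
qed

lemma lambda_rack_iso:
  assumes "finite X" "rack_isomorphism X op Y op' h"
  shows "lambda_rack X op = lambda_rack Y op'"
proof -
  have "is_rack X op" using assms(2) by (rule rack_isomorphism.rack_X)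
  with assms(1) have "\<forall>Y h. rack_isomorphism X op Y op' h \<longrightarrow> lambda_rack X op = lambda_rack Y op'"
  proof (induction rule: finite_rack_induct)
    case empty
    show ?case by (auto simp: rack_isomorphism_def bij_betw_def)
  next
    case (connected X)
    show ?case
    proof (intro allI impI)
      fix Y h assume iso: "rack_isomorphism X op Y op' h"
      then interpret rack_isomorphism X op Y op' h .
      obtain c where c: "c \<in> X" using connected(2) unfolding connected_rack_def by blast
      have "lambda_rack X op = perm_class X (op c)" by (rule lambda_rack_connected[OF connected c])
      also have "\<dots> = perm_class Y (op' (h c))" by (rule perm_class_left_iso[OF iso connected(1) c])
      also have "\<dots> = lambda_rack Y op'"
        by (rule lambda_rack_connected[symmetric, OF finite_Y[OF connected(1)]
              connected_rack_image[OF connected(2)] mem_Y[OF c]])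
      finally show "lambda_rack X op = lambda_rack Y op'" .
    qed
  next
    case (decomposition X S T)
    show ?case
    proof (intro allI impI)
      fix Y h assume "rack_isomorphism X op Y op' h"
      then interpret rack_isomorphism X op Y op' h .
      have sub: "is_subrack S X op" "is_subrack T X op"
        using decomposition(3) unfolding rack_decomposition_def by auto
      have "lambda_rack Y op' = lambda_rack (h ` S) op' + lambda_rack (h ` T) op'"
        by (rule lambda_rack_decomposition[OF finite_Y[OF decomposition(1)] rack_Y
              rack_decomposition_image[OF decomposition(3)]])
      also have "\<dots> = lambda_rack S op + lambda_rack T op"
        using decomposition(6) restrict[OF sub(1)] decomposition(7) restrict[OF sub(2)] by metis
      also have "\<dots> = lambda_rack X op"
        by (rule lambda_rack_decomposition[OF decomposition(1,2,3), symmetric])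
      finally show "lambda_rack X op = lambda_rack Y op'" by simp
    qed
  qed
  then show ?thesis using assms(2) by blast
qed

text \<open>The shape of a left multiplication of a product of connected racks, which itself need
  not be connected (see \<open>locally_inner_pair_op\<close>).\<close>
definition locally_inner :: "'a set \<Rightarrow> ('a \<Rightarrow> 'a \<Rightarrow> 'a) \<Rightarrow> ('a \<Rightarrow> 'a) \<Rightarrow> bool" where
  "locally_inner X op \<pi> \<longleftrightarrow> (\<forall>z\<in>X. \<exists>C. z \<in> C \<and> C \<subseteq> X \<and> connected_rack C op \<and>
      (\<forall>a\<in>X. op a ` C = C) \<and> (\<exists>c\<in>C. \<forall>y\<in>C. \<pi> y = op c y))"

lemma locally_inner_piece:
  assumes X: "is_rack X op" and d: "rack_decomposition X op S T" and \<pi>: "locally_inner X op \<pi>"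
  shows "locally_inner S op \<pi>" and "\<pi> ` S \<subseteq> S"
proof -
  have SX: "S \<subseteq> X" by (rule rack_decomposition_subset[OF d])
  show S: "locally_inner S op \<pi>"
    unfolding locally_inner_def
  proof
    fix z assume z: "z \<in> S"
    obtain C where C: "z \<in> C" "C \<subseteq> X" "connected_rack C op" "\<forall>a\<in>X. op a ` C = C"
      "\<exists>c\<in>C. \<forall>y\<in>C. \<pi> y = op c y"
      using bspec[OF \<pi>[unfolded locally_inner_def] subsetD[OF SX z]] by (elim exE conjE)
    have "C \<subseteq> S" by (rule connected_subrack_in_piece[OF X d C(3,2,1) z])
    moreover have "\<forall>a\<in>S. op a ` C = C" using C(4) SX by blast
    ultimately show "\<exists>C. z \<in> C \<and> C \<subseteq> S \<and> connected_rack C op \<and> (\<forall>a\<in>S. op a ` C = C)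
        \<and> (\<exists>c\<in>C. \<forall>y\<in>C. \<pi> y = op c y)"
      using C(1,3,5) by blast
  qed
  show "\<pi> ` S \<subseteq> S"
  proof (rule image_subsetI)
    fix z assume z: "z \<in> S"
    obtain C c where C: "z \<in> C" "C \<subseteq> S" "\<forall>a\<in>S. op a ` C = C"
      and c: "c \<in> C" "\<forall>y\<in>C. \<pi> y = op c y"
      using bspec[OF S[unfolded locally_inner_def] z] by (elim exE conjE bexE) blast
    have "op c z \<in> op c ` C" using C(1) by (rule imageI)
    then show "\<pi> z \<in> S" using C c by auto
  qed
qed

lemma locally_inner_connected:
  assumes X: "connected_rack X op" and \<pi>: "locally_inner X op \<pi>"
  obtains c where "c \<in> X" "\<And>y. y \<in> X \<Longrightarrow> \<pi> y = op c y"
proof -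
  have rX: "is_rack X op" using X unfolding connected_rack_def by simp
  obtain m where m: "m \<in> X" using X unfolding connected_rack_def by blast
  obtain C c where C: "m \<in> C" "C \<subseteq> X" "\<forall>a\<in>X. op a ` C = C"
    and c: "c \<in> C" "\<forall>y\<in>C. \<pi> y = op c y"
    using bspec[OF \<pi>[unfolded locally_inner_def] m] by (elim exE conjE bexE) blast
  have "X \<subseteq> inn_orbit X op m" using X m unfolding connected_rack_def by blast
  also have "\<dots> \<subseteq> C" by (rule inn_orbit_subset_invariant[OF rX C(2)]) (use C in auto)
  finally have "C = X" using C(2) by blast
  then show ?thesis using that c by blast
qed

lemma bij_betw_locally_inner_piece:
  assumes X: "finite X" "is_rack X op" and d: "rack_decomposition X op S T"
    and \<pi>: "bij_betw \<pi> X X" "locally_inner X op \<pi>"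
  shows "bij_betw \<pi> S S"
proof -
  have SX: "S \<subseteq> X" by (rule rack_decomposition_subset[OF d])
  have "inj_on \<pi> S" using inj_on_subset[OF bij_betw_imp_inj_on[OF \<pi>(1)] SX] .
  moreover from this have "\<pi> ` S = S"
    using endo_inj_surj[OF finite_subset[OF SX X(1)] locally_inner_piece(2)[OF X(2) d \<pi>(2)]] by blast
  ultimately show ?thesis by (simp add: bij_betw_def)
qed

lemma lambda_rack_locally_inner:
  assumes "finite X" "is_rack X op" "bij_betw \<pi> X X" "locally_inner X op \<pi>"
  shows "lambda_rack X op = perm_class X \<pi>"
proof -
  have "\<forall>\<pi>. bij_betw \<pi> X X \<longrightarrow> locally_inner X op \<pi> \<longrightarrow> lambda_rack X op = perm_class X \<pi>"
    using assms(1,2)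
  proof (induction rule: finite_rack_induct)
    case empty
    show ?case by (simp add: perm_class_empty)
  next
    case (connected X)
    show ?case
    proof (intro allI impI)
      fix \<pi> assume "locally_inner X op \<pi>"
      then obtain c where "c \<in> X" "\<And>y. y \<in> X \<Longrightarrow> \<pi> y = op c y"
        using locally_inner_connected[OF connected(2)] by blast
      then show "lambda_rack X op = perm_class X \<pi>"
        using lambda_rack_connected[OF connected] perm_class_cong[of X \<pi> "op c"] by simp
    qed
  next
    case (decomposition X S T)
    show ?case
    proof (intro allI impI)
      fix \<pi> assume \<pi>: "bij_betw \<pi> X X" "locally_inner X op \<pi>"
      note d = decomposition(3) rack_decomposition_sym[OF decomposition(3)]
      have SX: "S \<subseteq> X" and T: "T = X - S" using d(1) unfolding rack_decomposition_def by auto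
      have bij: "bij_betw \<pi> S S" "bij_betw \<pi> T T"
        using bij_betw_locally_inner_piece[OF decomposition(1,2) d(1) \<pi>]
          bij_betw_locally_inner_piece[OF decomposition(1,2) d(2) \<pi>] .
      have "lambda_rack X op = lambda_rack S op + lambda_rack T op"
        by (rule lambda_rack_decomposition[OF decomposition(1-3)])
      also have "\<dots> = perm_class S \<pi> + perm_class T \<pi>"
        using decomposition(6,7) bij locally_inner_piece(1)[OF decomposition(2) d(1) \<pi>(2)]
          locally_inner_piece(1)[OF decomposition(2) d(2) \<pi>(2)] by simp
      also have "\<dots> = perm_class X \<pi>"
        unfolding T using bij_betw_imp_surj_on[OF bij(1)] SX
        by (intro perm_class_decomposition[symmetric, OF decomposition(1) \<pi>(1)])
      finally show "lambda_rack X op = perm_class X \<pi>" .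
    qed
  qed
  then show ?thesis using assms(3,4) by blast
qed

lemma subrack_inn_orbit: "is_rack P op \<Longrightarrow> z \<in> P \<Longrightarrow> is_subrack (inn_orbit P op z) P op"
  unfolding is_subrack_def
  by (intro conjI ballI inn_orbit_subset left_image_inn_orbit) (auto dest: subsetD[OF inn_orbit_subset])

lemma inn_orbit_subset_inn_orbit_subrack:
  assumes P: "is_rack P op" and z: "z \<in> P" and y1: "y1 \<in> inn_orbit P op z"
    and rep: "\<And>p q. p \<in> P \<Longrightarrow> q \<in> P \<Longrightarrow> \<exists>s\<in>inn_orbit P op p. \<forall>y\<in>P. op s y = op q y"
  shows "inn_orbit P op y1 \<subseteq> inn_orbit (inn_orbit P op z) op y1"
proof
  let ?C = "inn_orbit P op z"
  have CP: "?C \<subseteq> P" by (rule inn_orbit_subset[OF P z])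
  have C: "is_rack ?C op" by (rule subrack_is_rack[OF P subrack_inn_orbit[OF P z]])
  have y1P: "y1 \<in> P" using y1 CP by blast
  have orbit_y1: "inn_orbit P op y1 \<subseteq> ?C" using inn_orbit_trans[OF y1] by (rule subsetI)
  fix t assume "t \<in> inn_orbit P op y1"
  then show "t \<in> inn_orbit ?C op y1"
  proof induct
    case base
    show ?case by (rule inn_orbit.base)
  next
    case (left a t)
    obtain s where s: "s \<in> inn_orbit P op y1" "\<forall>y\<in>P. op s y = op a y" using rep[OF y1P left(1)] by blast
    have "t \<in> P" using subsetD[OF inn_orbit_subset[OF P y1P] left(2)] .
    then have "op a t = op s t" using s(2) by simp
    then show ?case using inn_orbit.left[OF subsetD[OF orbit_y1 s(1)] left(3)] by simp
  next
    case (left_inv a t)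
    obtain s where s: "s \<in> inn_orbit P op y1" "\<forall>y\<in>P. op s y = op a y" using rep[OF y1P left_inv(1)] by blast
    have sC: "s \<in> ?C" using subsetD[OF orbit_y1 s(1)] .
    have tC: "t \<in> ?C" using subsetD[OF inn_orbit_subset[OF C y1] left_inv(3)] .
    let ?r = "inv_into ?C (op s) t"
    have r: "?r \<in> ?C" "op s ?r = t"
      using rack_left_inv_closed[OF C sC tC] rack_left_inv_cancel[OF C sC tC] by auto
    moreover have "?r \<in> P" using r(1) CP by blast
    ultimately have "op a ?r = t" using s(2) by simp
    then have "inv_into P (op a) t = ?r"
      using inv_into_f_eq[OF rack_left_inj_on[OF P left_inv(1)]] r(1) CP by blast
    then show ?case using inn_orbit.left_inv[OF sC left_inv(3)] by simp
  qed
qed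

lemma connected_inn_orbit:
  assumes P: "is_rack P op" and z: "z \<in> P"
    and rep: "\<And>p q. p \<in> P \<Longrightarrow> q \<in> P \<Longrightarrow> \<exists>s\<in>inn_orbit P op p. \<forall>y\<in>P. op s y = op q y"
  shows "connected_rack (inn_orbit P op z) op"
  unfolding connected_rack_def
proof (intro conjI ballI)
  let ?C = "inn_orbit P op z"
  have CP: "?C \<subseteq> P" by (rule inn_orbit_subset[OF P z])
  show "is_rack ?C op" by (rule subrack_is_rack[OF P subrack_inn_orbit[OF P z]])
  show "?C \<noteq> {}" using inn_orbit.base[of z P op] by blast
  fix y1 y2 assume y: "y1 \<in> ?C" "y2 \<in> ?C"
  have "z \<in> inn_orbit P op y1" by (rule inn_orbit_sym[OF P z y(1)])
  then have "y2 \<in> inn_orbit P op y1" using y(2) by (rule inn_orbit_trans)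
  with inn_orbit_subset_inn_orbit_subrack[OF P z y(1) rep] show "y2 \<in> inn_orbit ?C op y1" by (rule subsetD)
qed

lemma locally_inner_left:
  assumes P: "is_rack P op" and w: "w \<in> P"
    and rep: "\<And>p q. p \<in> P \<Longrightarrow> q \<in> P \<Longrightarrow> \<exists>s\<in>inn_orbit P op p. \<forall>y\<in>P. op s y = op q y"
  shows "locally_inner P op (op w)"
  unfolding locally_inner_def
proof
  fix z assume z: "z \<in> P"
  let ?C = "inn_orbit P op z"
  obtain s where s: "s \<in> ?C" "\<forall>y\<in>P. op s y = op w y" using rep[OF z w] by blast
  have CP: "?C \<subseteq> P" by (rule inn_orbit_subset[OF P z])
  have "\<forall>y\<in>?C. op w y = op s y" using s(2) CP by auto
  with s(1) have "\<exists>c\<in>?C. \<forall>y\<in>?C. op w y = op c y" by blast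
  moreover have "\<forall>a\<in>P. op a ` ?C = ?C" using left_image_inn_orbit[OF P z] by blast
  ultimately show "\<exists>C. z \<in> C \<and> C \<subseteq> P \<and> connected_rack C op \<and> (\<forall>a\<in>P. op a ` C = C) \<and>
      (\<exists>c\<in>C. \<forall>y\<in>C. op w y = op c y)"
    using inn_orbit.base[of z P op] CP connected_inn_orbit[OF P z rep] by blast
qed

section \<open>Products of racks\<close>

definition pair_set :: "nat set \<Rightarrow> nat set \<Rightarrow> nat set" where
  "pair_set X Y = prod_encode ` (X \<times> Y)"

definition pair_map :: "(nat \<Rightarrow> nat) \<Rightarrow> (nat \<Rightarrow> nat) \<Rightarrow> nat \<Rightarrow> nat" where
  "pair_map f g = prod_encode \<circ> map_prod f g \<circ> prod_decode"

definition pair_op :: "(nat \<Rightarrow> nat \<Rightarrow> nat) \<Rightarrow> (nat \<Rightarrow> nat \<Rightarrow> nat) \<Rightarrow> nat \<Rightarrow> nat \<Rightarrow> nat" where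
  "pair_op op op' u = pair_map (op (fst (prod_decode u))) (op' (snd (prod_decode u)))"

lemma pair_map_encode [simp]: "pair_map f g (prod_encode (a, b)) = prod_encode (f a, g b)"
  by (simp add: pair_map_def)

lemma pair_op_encode [simp]: "pair_op op op' (prod_encode (a, b)) = pair_map (op a) (op' b)"
  by (simp add: pair_op_def)

lemma encode_mem_pair_set [simp]: "prod_encode (a, b) \<in> pair_set X Y \<longleftrightarrow> a \<in> X \<and> b \<in> Y"
  by (auto simp: pair_set_def)

lemma pair_setE:
  assumes "u \<in> pair_set X Y" obtains a b where "a \<in> X" "b \<in> Y" "u = prod_encode (a, b)"
  using assms unfolding pair_set_def by blast

lemma finite_pair_set: "finite X \<Longrightarrow> finite Y \<Longrightarrow> finite (pair_set X Y)"
  by (simp add: pair_set_def)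

lemma pair_set_empty [simp]: "pair_set {} Y = {}" "pair_set X {} = {}"
  by (simp_all add: pair_set_def)

lemma pair_set_Int: "pair_set A B \<inter> pair_set C D = pair_set (A \<inter> C) (B \<inter> D)"
  unfolding pair_set_def Times_Int_Times[symmetric] by (rule image_Int[symmetric]) (rule inj_prod_encode)

lemma pair_set_Un_left: "pair_set (A \<union> B) C = pair_set A C \<union> pair_set B C"
  unfolding pair_set_def by (simp add: Sigma_Un_distrib1 image_Un)

lemma pair_set_Un_right: "pair_set A (B \<union> C) = pair_set A B \<union> pair_set A C"
  unfolding pair_set_def by (simp add: Sigma_Un_distrib2 image_Un)

lemma pair_set_Diff_left: "pair_set A C - pair_set B C = pair_set (A - B) C"
  unfolding pair_set_def Times_Diff_distrib1 by (simp add: image_set_diff[OF inj_prod_encode[of UNIV]])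

lemma pair_map_image: "pair_map f g ` pair_set A B = pair_set (f ` A) (g ` B)"
proof -
  have "pair_map f g ` prod_encode ` (A \<times> B) = prod_encode ` map_prod f g ` (A \<times> B)"
    by (simp add: image_image pair_map_def)
  then show ?thesis unfolding pair_set_def by (simp add: map_prod_surj_on[OF refl refl])
qed

lemma bij_betw_pair_map:
  assumes "bij_betw f X X'" "bij_betw g Y Y'"
  shows "bij_betw (pair_map f g) (pair_set X Y) (pair_set X' Y')"
proof -
  have enc: "bij_betw prod_encode A (prod_encode ` A)" for A :: "(nat \<times> nat) set"
    by (rule inj_on_imp_bij_betw[OF inj_prod_encode])
  have dec: "bij_betw prod_decode (prod_encode ` A) A" for A :: "(nat \<times> nat) set"
    by (rule bij_betw_byWitness[where f' = prod_encode]) auto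
  show ?thesis
    unfolding pair_map_def pair_set_def
    by (rule bij_betw_trans[OF dec bij_betw_trans[OF bij_betw_map_prod[OF assms] enc]])
qed

lemma pair_op_is_rack:
  assumes X: "is_rack X op" and Y: "is_rack Y op'"
  shows "is_rack (pair_set X Y) (pair_op op op')"
  unfolding is_rack_def
proof (intro conjI ballI)
  fix w assume "w \<in> pair_set X Y"
  then obtain a b where "a \<in> X" "b \<in> Y" "w = prod_encode (a, b)" by (rule pair_setE)
  then show "bij_betw (pair_op op op' w) (pair_set X Y) (pair_set X Y)"
    by (simp add: bij_betw_pair_map rack_left_bij[OF X] rack_left_bij[OF Y])
next
  fix u v w assume "u \<in> pair_set X Y" "v \<in> pair_set X Y" "w \<in> pair_set X Y"
  then show "pair_op op op' u (pair_op op op' v w) = pair_op op op' (pair_op op op' u v) (pair_op op op' u w)"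
    by (elim pair_setE) (simp add: rack_left_distrib[OF X] rack_left_distrib[OF Y])
qed

lemma subrack_pair_set:
  assumes X: "is_rack X op" and Y: "is_rack Y op'"
    and S: "is_subrack S X op" and S': "is_subrack S' Y op'"
  shows "is_subrack (pair_set S S') (pair_set X Y) (pair_op op op')"
  unfolding is_subrack_def
proof (intro conjI ballI)
  show "pair_set S S' \<subseteq> pair_set X Y" using S S' unfolding is_subrack_def pair_set_def by auto
  fix w assume "w \<in> pair_set S S'"
  then obtain a b where "a \<in> S" "b \<in> S'" "w = prod_encode (a, b)" by (rule pair_setE)
  then show "pair_op op op' w ` pair_set S S' = pair_set S S'"
    using S S' unfolding is_subrack_def by (simp add: pair_map_image)
qed

lemma rack_decomposition_pair_left:
  assumes X: "is_rack X op" and Y: "is_rack Y op'" and d: "rack_decomposition X op S T"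
  shows "rack_decomposition (pair_set X Y) (pair_op op op') (pair_set S Y) (pair_set T Y)"
proof -
  have "is_subrack S X op" "is_subrack T X op" and ST: "S \<inter> T = {}" "S \<union> T = X"
    using d unfolding rack_decomposition_def by auto
  then show ?thesis
    unfolding rack_decomposition_def using subrack_pair_set[OF X Y _ subrack_self[OF Y]]
    by (simp add: pair_set_Int pair_set_Un_left[symmetric] ST)
qed

lemma rack_decomposition_pair_right:
  assumes X: "is_rack X op" and Y: "is_rack Y op'" and d: "rack_decomposition Y op' S T"
  shows "rack_decomposition (pair_set X Y) (pair_op op op') (pair_set X S) (pair_set X T)"
proof -
  have "is_subrack S Y op'" "is_subrack T Y op'" and ST: "S \<inter> T = {}" "S \<union> T = Y"
    using d unfolding rack_decomposition_def by auto
  then show ?thesis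
    unfolding rack_decomposition_def using subrack_pair_set[OF X Y subrack_self[OF X]]
    by (simp add: pair_set_Int pair_set_Un_right[symmetric] ST)
qed

lemma pair_op_inv_into:
  assumes X: "is_rack X op" and Y: "is_rack Y op'" and "a \<in> X" "b \<in> Y" "c \<in> X" "d \<in> Y"
  shows "inv_into (pair_set X Y) (pair_op op op' (prod_encode (a, b))) (prod_encode (c, d))
    = prod_encode (inv_into X (op a) c, inv_into Y (op' b) d)"
proof (rule inv_into_f_eq)
  show "inj_on (pair_op op op' (prod_encode (a, b))) (pair_set X Y)"
    using rack_left_inj_on[OF pair_op_is_rack[OF X Y], of "prod_encode (a, b)"] assms(3,4) by simp
  show "prod_encode (inv_into X (op a) c, inv_into Y (op' b) d) \<in> pair_set X Y"
    using rack_left_inv_closed[OF X] rack_left_inv_closed[OF Y] assms(3-6) by simp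
  show "pair_op op op' (prod_encode (a, b)) (prod_encode (inv_into X (op a) c, inv_into Y (op' b) d))
      = prod_encode (c, d)"
    using rack_left_inv_cancel[OF X] rack_left_inv_cancel[OF Y] assms(3-6) by simp
qed

lemma inn_orbit_pair_first:
  assumes X: "is_rack X op" and Y: "is_rack Y op'" and x: "x \<in> X" and y: "y \<in> Y"
    and u: "u \<in> inn_orbit X op x"
  shows "\<exists>y'\<in>Y. prod_encode (u, y') \<in> inn_orbit (pair_set X Y) (pair_op op op') (prod_encode (x, y))"
  using u
proof induct
  case base
  show ?case using y inn_orbit.base[of "prod_encode (x, y)" "pair_set X Y" "pair_op op op'"] by blast
next
  case (left a u)
  then obtain y' where y': "y' \<in> Y"
    "prod_encode (u, y') \<in> inn_orbit (pair_set X Y) (pair_op op op') (prod_encode (x, y))" by blast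
  have "prod_encode (a, y) \<in> pair_set X Y" using left(1) y by simp
  from inn_orbit.left[OF this y'(2)] show ?case using rack_closed[OF Y y y'(1)] by auto
next
  case (left_inv a u)
  then obtain y' where y': "y' \<in> Y"
    "prod_encode (u, y') \<in> inn_orbit (pair_set X Y) (pair_op op op') (prod_encode (x, y))" by blast
  have "u \<in> X" using subsetD[OF inn_orbit_subset[OF X x] left_inv(2)] .
  have "prod_encode (a, y) \<in> pair_set X Y" using left_inv(1) y by simp
  from inn_orbit.left_inv[OF this y'(2)] show ?case
    using pair_op_inv_into[OF X Y left_inv(1) y \<open>u \<in> X\<close> y'(1)] rack_left_inv_closed[OF Y y y'(1)] by auto
qed

text \<open>Multiplying by pairs \<open>(u, b)\<close> replaces the first coordinate \<open>u\<close> by \<open>u \<rhd> u\<close> or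
  \<open>\<ell>\<^sub>u\<^sup>-\<^sup>1 u\<close>, which have the same left multiplication as \<open>u\<close>.\<close>
lemma inn_orbit_pair_second:
  assumes X: "is_rack X op" and Y: "is_rack Y op'" and u: "u \<in> X" and y: "y \<in> Y"
    and p: "prod_encode (u, y) \<in> inn_orbit (pair_set X Y) (pair_op op op') p"
    and v: "v \<in> inn_orbit Y op' y"
  shows "\<exists>u'\<in>X. (\<forall>z\<in>X. op u' z = op u z) \<and> prod_encode (u', v) \<in> inn_orbit (pair_set X Y) (pair_op op op') p"
  using v
proof induct
  case base
  show ?case using u p by blast
next
  case (left b v)
  then obtain u' where u': "u' \<in> X" "\<forall>z\<in>X. op u' z = op u z"
    "prod_encode (u', v) \<in> inn_orbit (pair_set X Y) (pair_op op op') p" by blast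
  have "prod_encode (u', b) \<in> pair_set X Y" using left(1) u'(1) by simp
  from inn_orbit.left[OF this u'(3)]
  have "prod_encode (op u' u', op' b v) \<in> inn_orbit (pair_set X Y) (pair_op op op') p" by simp
  moreover have "\<forall>z\<in>X. op (op u' u') z = op u z" using rack_left_self[OF X u'(1)] u'(2) by simp
  ultimately show ?case using rack_closed[OF X u'(1) u'(1)] by blast
next
  case (left_inv b v)
  then obtain u' where u': "u' \<in> X" "\<forall>z\<in>X. op u' z = op u z"
    "prod_encode (u', v) \<in> inn_orbit (pair_set X Y) (pair_op op op') p" by blast
  have "v \<in> Y" using subsetD[OF inn_orbit_subset[OF Y y] left_inv(2)] .
  have "prod_encode (u', b) \<in> pair_set X Y" using left_inv(1) u'(1) by simp
  from inn_orbit.left_inv[OF this u'(3)]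
  have "prod_encode (inv_into X (op u') u', inv_into Y (op' b) v) \<in> inn_orbit (pair_set X Y) (pair_op op op') p"
    using pair_op_inv_into[OF X Y u'(1) left_inv(1) u'(1) \<open>v \<in> Y\<close>] by simp
  moreover have "\<forall>z\<in>X. op (inv_into X (op u') u') z = op u z"
    using rack_left_inv_self[OF X u'(1)] u'(2) by simp
  ultimately show ?case using rack_left_inv_closed[OF X u'(1) u'(1)] by blast
qed

lemma pair_left_mult_in_inn_orbit:
  assumes X: "connected_rack X op" and Y: "connected_rack Y op'"
    and p: "p \<in> pair_set X Y" and q: "q \<in> pair_set X Y"
  shows "\<exists>s\<in>inn_orbit (pair_set X Y) (pair_op op op') p. \<forall>w\<in>pair_set X Y.
    pair_op op op' s w = pair_op op op' q w"
proof -
  have rX: "is_rack X op" and rY: "is_rack Y op'" using X Y unfolding connected_rack_def by auto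
  obtain x y where xy: "x \<in> X" "y \<in> Y" "p = prod_encode (x, y)" using p by (rule pair_setE)
  obtain u v where uv: "u \<in> X" "v \<in> Y" "q = prod_encode (u, v)" using q by (rule pair_setE)
  have "u \<in> inn_orbit X op x" using X xy(1) uv(1) unfolding connected_rack_def by blast
  then obtain y1 where y1: "y1 \<in> Y" "prod_encode (u, y1) \<in> inn_orbit (pair_set X Y) (pair_op op op') p"
    using inn_orbit_pair_first[OF rX rY xy(1,2)] xy(3) by blast
  have "v \<in> inn_orbit Y op' y1" using Y y1(1) uv(2) unfolding connected_rack_def by blast
  then obtain u' where u': "u' \<in> X" "\<forall>z\<in>X. op u' z = op u z"
    "prod_encode (u', v) \<in> inn_orbit (pair_set X Y) (pair_op op op') p"
    using inn_orbit_pair_second[OF rX rY uv(1) y1] by blast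
  have "pair_op op op' (prod_encode (u', v)) w = pair_op op op' q w" if "w \<in> pair_set X Y" for w
    using that uv(3) u'(2) by (auto elim: pair_setE)
  then show ?thesis using u'(3) by blast
qed

lemma locally_inner_pair_op:
  assumes "connected_rack X op" "connected_rack Y op'" "w \<in> pair_set X Y"
  shows "locally_inner (pair_set X Y) (pair_op op op') (pair_op op op' w)"
proof -
  have "is_rack X op" "is_rack Y op'" using assms(1,2) unfolding connected_rack_def by auto
  then show ?thesis
    by (rule locally_inner_left[OF pair_op_is_rack assms(3) pair_left_mult_in_inn_orbit[OF assms(1,2)]])
qed

section \<open>Multiplication in \<open>B(\<int>)\<close>\<close>

definition frag_extend2 ::
    "('a \<Rightarrow> 'b \<Rightarrow> 'c \<Rightarrow>\<^sub>0 int) \<Rightarrow> ('a \<Rightarrow>\<^sub>0 int) \<Rightarrow> ('b \<Rightarrow>\<^sub>0 int) \<Rightarrow> 'c \<Rightarrow>\<^sub>0 int" where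
  "frag_extend2 F u v = frag_extend (\<lambda>a. frag_extend (F a) v) u"

lemma frag_extend_fun_diff: "frag_extend (\<lambda>a. F a - G a) u = frag_extend F u - frag_extend G u"
  using subset_UNIV by (induction u rule: frag_induction) (auto simp: frag_extend_diff)

lemma frag_extend_frag_extend: "frag_extend F (frag_extend G u) = frag_extend (\<lambda>a. frag_extend F (G a)) u"
  using subset_UNIV by (induction u rule: frag_induction) (auto simp: frag_extend_diff)

lemma frag_extend2_of [simp]: "frag_extend2 F (frag_of a) (frag_of b) = F a b"
  by (simp add: frag_extend2_def)

lemma frag_extend2_diff_left: "frag_extend2 F (u - u') v = frag_extend2 F u v - frag_extend2 F u' v"
  by (simp add: frag_extend2_def frag_extend_diff)

lemma frag_extend2_add_left: "frag_extend2 F (u + u') v = frag_extend2 F u v + frag_extend2 F u' v"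
  by (simp add: frag_extend2_def frag_extend_add)

lemma frag_extend2_diff_right: "frag_extend2 F u (v - v') = frag_extend2 F u v - frag_extend2 F u v'"
  by (simp add: frag_extend2_def frag_extend_diff frag_extend_fun_diff)

lemma frag_extend2_add_right: "frag_extend2 F u (v + v') = frag_extend2 F u v + frag_extend2 F u v'"
  using subset_UNIV by (induction u rule: frag_induction) (auto simp: frag_extend2_def frag_extend_add frag_extend_diff)

lemma frag_extend2_zero [simp]: "frag_extend2 F 0 v = 0" "frag_extend2 F u 0 = 0"
  by (simp_all add: frag_extend2_def frag_extend_eq_0)

lemma frag_extend2_fun_diff:
  "frag_extend2 (\<lambda>a b. F a b - G a b) u v = frag_extend2 F u v - frag_extend2 G u v"
  by (simp add: frag_extend2_def frag_extend_fun_diff)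

lemma frag_extend2_swap: "frag_extend2 F u v = frag_extend2 (\<lambda>b a. F a b) v u"
  using subset_UNIV
proof (induction u rule: frag_induction)
  case zero
  show ?case by (simp add: frag_extend2_def frag_extend_eq_0)
next
  case (one a)
  show ?case by (simp add: frag_extend2_def)
next
  case (diff u u')
  then show ?case by (simp add: frag_extend2_def frag_extend_diff frag_extend_fun_diff)
qed

lemma frag_extend2_frag_extend_left:
  "frag_extend2 F (frag_extend G u) v = frag_extend (\<lambda>a. frag_extend2 F (G a) v) u"
  by (simp add: frag_extend2_def frag_extend_frag_extend)

lemma frag_extend2_frag_extend_right:
  "frag_extend2 F u (frag_extend G v) = frag_extend (\<lambda>b. frag_extend2 F u (G b)) v"
  by (subst frag_extend2_swap) (simp add: frag_extend2_frag_extend_left frag_extend2_swap[of _ u])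

lemma frag_extend2_compose:
  "frag_extend2 F (frag_extend G u) (frag_extend G' v)
    = frag_extend2 (\<lambda>a b. frag_extend2 F (G a) (G' b)) u v"
proof -
  have "frag_extend2 F (frag_extend G u) (frag_extend G' v)
      = frag_extend (\<lambda>a. frag_extend2 F (G a) (frag_extend G' v)) u"
    by (rule frag_extend2_frag_extend_left)
  also have "\<dots> = frag_extend (\<lambda>a. frag_extend (\<lambda>b. frag_extend2 F (G a) (G' b)) v) u"
    by (simp only: frag_extend2_frag_extend_right)
  also have "\<dots> = frag_extend2 (\<lambda>a b. frag_extend2 F (G a) (G' b)) u v"
    by (simp only: frag_extend2_def[of "\<lambda>a b. frag_extend2 F (G a) (G' b)"])
  finally show ?thesis .
qed

lemma frag_extend_frag_extend2:
  "frag_extend H (frag_extend2 F u v) = frag_extend2 (\<lambda>a b. frag_extend H (F a b)) u v"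
  by (simp add: frag_extend2_def frag_extend_frag_extend)

lemma bz_rel_frag_extend2: "(\<And>a b. F a b \<in> bz_rel) \<Longrightarrow> frag_extend2 F u v \<in> bz_rel"
  unfolding frag_extend2_def by (intro bz_rel_frag_extend)

lemma frag_cmul_single: "frag_cmul c (Poly_Mapping.single x d) = Poly_Mapping.single x (c * d)"
  by (rule poly_mapping_eqI) (simp add: lookup_single when_def)

lemma free_mul_z_eq: "free_mul_z = frag_extend2 (\<lambda>a b. frag_of (pcode_prod a b))"
  by (simp add: fun_eq_iff free_mul_z_def frag_extend2_def frag_extend_def frag_cmul_sum frag_cmul_single)

lemma free_mul_r_eq: "free_mul_r = frag_extend2 (\<lambda>a b. frag_of (rcode_prod a b))"
  by (simp add: fun_eq_iff free_mul_r_def frag_extend2_def frag_extend_def frag_cmul_sum frag_cmul_single)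

lemma free_mul_z_frag_extend:
  "free_mul_z (frag_extend G u) (frag_extend G' v) = frag_extend2 (\<lambda>a b. free_mul_z (G a) (G' b)) u v"
  unfolding free_mul_z_eq by (rule frag_extend2_compose)

lemma free_mul_z_perm_gen:
  assumes "finite X" "bij_betw f X X" "finite Y" "bij_betw g Y Y"
  shows "free_mul_z (perm_gen X f) (perm_gen Y g) = perm_gen (pair_set X Y) (pair_map f g)"
proof -
  have "perm_restrict (pair_map f g) (pair_set X Y) = (\<lambda>u. if u \<in> prod_encode ` (X \<times> Y)
      then prod_encode (perm_restrict f X (fst (prod_decode u)), perm_restrict g Y (snd (prod_decode u))) else u)"
    by (auto simp: fun_eq_iff perm_restrict_def pair_set_def)
  then show ?thesis
    unfolding free_mul_z_eq perm_gen_def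
    by (simp add: pcode_prod_def Rep_pcode_perm_restrict assms pair_set_def)
qed

lemma perm_iso_pair_left:
  assumes "perm_iso X f X' f'"
  shows "perm_iso (pair_set X Y) (pair_map f g) (pair_set X' Y) (pair_map f' g)"
proof -
  obtain h where h: "bij_betw h X X'" "\<forall>x\<in>X. h (f x) = f' (h x)" using assms unfolding perm_iso_def by blast
  have "bij_betw (pair_map h id) (pair_set X Y) (pair_set X' Y)" by (rule bij_betw_pair_map[OF h(1) bij_betw_id])
  moreover have "pair_map h id (pair_map f g u) = pair_map f' g (pair_map h id u)" if "u \<in> pair_set X Y" for u
    using that h(2) by (auto elim: pair_setE)
  ultimately show ?thesis unfolding perm_iso_def by blast
qed

lemma perm_iso_pair_swap: "perm_iso (pair_set X Y) (pair_map f g) (pair_set Y X) (pair_map g f)"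
proof -
  let ?swap = "\<lambda>u. prod_encode (prod.swap (prod_decode u))"
  have [simp]: "?swap (prod_encode (a, b)) = prod_encode (b, a)" for a b by simp
  have "bij_betw ?swap (pair_set X Y) (pair_set Y X)"
    by (rule bij_betw_byWitness[where f' = ?swap]) (auto elim!: pair_setE)
  moreover have "?swap (pair_map f g u) = pair_map g f (?swap u)" if "u \<in> pair_set X Y" for u
    using that by (auto elim: pair_setE)
  ultimately show ?thesis unfolding perm_iso_def by blast
qed

lemma perm_gen_pair_decomposition:
  assumes "finite X" "bij_betw \<pi> X X" "\<pi> ` S = S" "S \<subseteq> X" "finite Z" "bij_betw \<tau> Z Z"
  shows "perm_gen (pair_set X Z) (pair_map \<pi> \<tau>) - perm_gen (pair_set S Z) (pair_map \<pi> \<tau>)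
    - perm_gen (pair_set (X - S) Z) (pair_map \<pi> \<tau>) \<in> bz_rel"
proof -
  have "pair_map \<pi> \<tau> ` pair_set S Z = pair_set S Z"
    using assms(3) bij_betw_imp_surj_on[OF assms(6)] by (simp add: pair_map_image)
  moreover have "pair_set S Z \<subseteq> pair_set X Z" using assms(4) by (auto simp: pair_set_def)
  ultimately have "perm_gen (pair_set X Z) (pair_map \<pi> \<tau>) - perm_gen (pair_set S Z) (pair_map \<pi> \<tau>)
    - perm_gen (pair_set X Z - pair_set S Z) (pair_map \<pi> \<tau>) \<in> bz_rel"
    by (rule perm_gen_decomposition[OF finite_pair_set[OF assms(1,5)] bij_betw_pair_map[OF assms(2,6)]])
  then show ?thesis by (simp only: pair_set_Diff_left)
qed

lemma free_mul_z_frag_of_right: "free_mul_z u v = frag_extend (\<lambda>c. free_mul_z u (frag_of c)) v"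
  unfolding free_mul_z_eq by (subst frag_extend2_swap) (simp add: frag_extend2_def)

lemma bz_rel_mult_left:
  assumes "u \<in> bz_rel" shows "free_mul_z u v \<in> bz_rel"
  using assms
proof induct
  case (iso A X \<pi> B Y \<sigma>)
  note A = Rep_pcode_perm_gen[OF iso(1)] and B = Rep_pcode_perm_gen[OF iso(2)]
  have "free_mul_z (frag_of A - frag_of B) (frag_of c) \<in> bz_rel" for c
  proof -
    obtain Z \<tau> where C: "frag_of c = perm_gen Z \<tau>" "finite Z" "bij_betw \<tau> Z Z" by (rule pcode_perm_gen)
    have "perm_class (pair_set X Z) (pair_map \<pi> \<tau>) = perm_class (pair_set Y Z) (pair_map \<sigma> \<tau>)"
      using A(2,3) B(2,3) C(2,3)
      by (intro perm_class_iso perm_iso_pair_left[OF iso(3)] finite_pair_set bij_betw_pair_map)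
    then show ?thesis
      unfolding perm_class_def abs_bz_eq_iff
      by (simp add: A(1) B(1) C free_mul_z_eq frag_extend2_diff_left free_mul_z_perm_gen[symmetric] A(2,3) B(2,3))
  qed
  then show ?case by (subst free_mul_z_frag_of_right) (rule bz_rel_frag_extend)
next
  case (dec A X \<pi> S T B C)
  note A = Rep_pcode_perm_gen[OF dec(1)]
  have T: "T = X - S" and SX: "S \<subseteq> X" using dec(4,5) by auto
  have "inj_on \<pi> S" "inj_on \<pi> T" using inj_on_subset[OF bij_betw_imp_inj_on[OF A(3)]] dec(5) by blast+
  then have bij: "bij_betw \<pi> S S" "bij_betw \<pi> T T" using dec(2,3) by (simp_all add: bij_betw_def)
  have BC: "frag_of B = perm_gen S \<pi>" "frag_of C = perm_gen T \<pi>"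
    using Rep_pcode_perm_gen(1)[OF dec(6)] Rep_pcode_perm_gen(1)[OF dec(7)] by (auto intro: perm_gen_cong)
  have fin: "finite S" "finite T" using A(2) dec(5) by auto
  have "free_mul_z (frag_of A - frag_of B - frag_of C) (frag_of c) \<in> bz_rel" for c
  proof -
    obtain Z \<tau> where D: "frag_of c = perm_gen Z \<tau>" "finite Z" "bij_betw \<tau> Z Z" by (rule pcode_perm_gen)
    show ?thesis
      using perm_gen_pair_decomposition[OF A(2,3) dec(2) SX D(2,3), folded T]
      by (simp add: A(1) BC D free_mul_z_eq frag_extend2_diff_left free_mul_z_perm_gen[symmetric] A(2,3) fin bij)
  qed
  then show ?case by (subst free_mul_z_frag_of_right) (rule bz_rel_frag_extend)
next
  case zero
  show ?case by (simp add: free_mul_z_eq bz_rel.zero)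
next
  case (diff u u')
  then show ?case by (simp add: free_mul_z_eq frag_extend2_diff_left bz_rel.diff)
qed

lemma bz_rel_mult_commute: "free_mul_z u v - free_mul_z v u \<in> bz_rel"
proof -
  have "frag_of (pcode_prod a b) - frag_of (pcode_prod b a) \<in> bz_rel" for a b
  proof -
    obtain X f Y g where A: "frag_of a = perm_gen X f" "finite X" "bij_betw f X X"
      and B: "frag_of b = perm_gen Y g" "finite Y" "bij_betw g Y Y" by (metis pcode_perm_gen)
    have "perm_class (pair_set X Y) (pair_map f g) = perm_class (pair_set Y X) (pair_map g f)"
      using A(2,3) B(2,3) by (intro perm_class_iso perm_iso_pair_swap finite_pair_set bij_betw_pair_map)
    then show ?thesis
      using free_mul_z_perm_gen[OF A(2,3) B(2,3)] free_mul_z_perm_gen[OF B(2,3) A(2,3)]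
      unfolding perm_class_def abs_bz_eq_iff A(1)[symmetric] B(1)[symmetric] free_mul_z_eq by simp
  qed
  then have "frag_extend2 (\<lambda>a b. frag_of (pcode_prod a b) - frag_of (pcode_prod b a)) u v \<in> bz_rel"
    by (rule bz_rel_frag_extend2)
  then show ?thesis
    unfolding frag_extend2_fun_diff free_mul_z_eq by (subst (asm) frag_extend2_swap[of _ u]) simp
qed

lemma abs_bz_mult: "abs_bz u * abs_bz v = abs_bz (free_mul_z u v)"
proof -
  have "free_mul_z u' v' - free_mul_z u v \<in> bz_rel" if "u' - u \<in> bz_rel" "v' - v \<in> bz_rel" for u' v'
  proof -
    have "free_mul_z u' v' - free_mul_z u v
        = free_mul_z (u' - u) v' + (free_mul_z u (v' - v) - free_mul_z (v' - v) u) + free_mul_z (v' - v) u"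
      by (simp add: free_mul_z_eq frag_extend2_diff_left frag_extend2_diff_right algebra_simps)
    then show ?thesis
      using that bz_rel_mult_left bz_rel_mult_commute bz_rel_add by metis
  qed
  then show ?thesis
    unfolding times_bz_def abs_bz_eq_iff using rep_bz_abs_bz by blast
qed

lemma perm_class_mult:
  assumes "finite X" "bij_betw f X X" "finite Y" "bij_betw g Y Y"
  shows "perm_class X f * perm_class Y g = perm_class (pair_set X Y) (pair_map f g)"
  unfolding perm_class_def abs_bz_mult free_mul_z_perm_gen[OF assms] ..

lemma bz_mult_zero [simp]: "0 * x = (0 :: bz)" "x * 0 = (0 :: bz)"
  by (induct x rule: bz.abs_induct, simp add: zero_bz_def abs_bz_mult free_mul_z_eq)+

lemma bz_distrib_right: "(x + y) * z = x * z + y * (z :: bz)"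
  by (induct x rule: bz.abs_induct, induct y rule: bz.abs_induct, induct z rule: bz.abs_induct)
     (simp add: abs_bz_add abs_bz_mult free_mul_z_eq frag_extend2_add_left)

lemma bz_distrib_left: "x * (y + z) = x * y + x * (z :: bz)"
  by (induct x rule: bz.abs_induct, induct y rule: bz.abs_induct, induct z rule: bz.abs_induct)
     (simp add: abs_bz_add abs_bz_mult free_mul_z_eq frag_extend2_add_right)

section \<open>The ring homomorphism\<close>

lemma lambda_rack_pair_connected_left:
  assumes X: "finite X" "connected_rack X op" and Y: "finite Y" "is_rack Y op'"
  shows "lambda_rack (pair_set X Y) (pair_op op op') = lambda_rack X op * lambda_rack Y op'"
  using Y
proof (induction rule: finite_rack_induct)
  case empty
  show ?case by simp
next
  case (connected Y)
  obtain a b where ab: "a \<in> X" "b \<in> Y" using X(2) connected(2) unfolding connected_rack_def by blast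
  have rX: "is_rack X op" and rY: "is_rack Y op'" using X(2) connected(2) unfolding connected_rack_def by auto
  have P: "finite (pair_set X Y)" "is_rack (pair_set X Y) (pair_op op op')"
    using finite_pair_set[OF X(1) connected(1)] pair_op_is_rack[OF rX rY] by auto
  have w: "prod_encode (a, b) \<in> pair_set X Y" using ab by simp
  have "lambda_rack (pair_set X Y) (pair_op op op') = perm_class (pair_set X Y) (pair_op op op' (prod_encode (a, b)))"
    by (rule lambda_rack_locally_inner[OF P rack_left_bij[OF P(2) w] locally_inner_pair_op[OF X(2) connected(2) w]])
  also have "\<dots> = perm_class X (op a) * perm_class Y (op' b)"
    using perm_class_mult[OF X(1) rack_left_bij[OF rX ab(1)] connected(1) rack_left_bij[OF rY ab(2)]] by simp
  also have "\<dots> = lambda_rack X op * lambda_rack Y op'"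
    using lambda_rack_connected[OF X ab(1)] lambda_rack_connected[OF connected ab(2)] by simp
  finally show ?case .
next
  case (decomposition Y S T)
  have rX: "is_rack X op" using X(2) unfolding connected_rack_def by simp
  have "lambda_rack (pair_set X Y) (pair_op op op')
      = lambda_rack (pair_set X S) (pair_op op op') + lambda_rack (pair_set X T) (pair_op op op')"
    by (rule lambda_rack_decomposition[OF finite_pair_set[OF X(1) decomposition(1)] pair_op_is_rack[OF rX decomposition(2)]
          rack_decomposition_pair_right[OF rX decomposition(2,3)]])
  also have "\<dots> = lambda_rack X op * (lambda_rack S op' + lambda_rack T op')"
    using decomposition(6,7) by (simp add: bz_distrib_left)
  also have "\<dots> = lambda_rack X op * lambda_rack Y op'"
    using lambda_rack_decomposition[OF decomposition(1-3)] by simp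
  finally show ?case .
qed

theorem lambda_rack_pair:
  assumes X: "finite X" "is_rack X op" and Y: "finite Y" "is_rack Y op'"
  shows "lambda_rack (pair_set X Y) (pair_op op op') = lambda_rack X op * lambda_rack Y op'"
  using X
proof (induction rule: finite_rack_induct)
  case empty
  show ?case by simp
next
  case (connected X)
  show ?case by (rule lambda_rack_pair_connected_left[OF connected Y])
next
  case (decomposition X S T)
  have "lambda_rack (pair_set X Y) (pair_op op op')
      = lambda_rack (pair_set S Y) (pair_op op op') + lambda_rack (pair_set T Y) (pair_op op op')"
    by (rule lambda_rack_decomposition[OF finite_pair_set[OF decomposition(1) Y(1)] pair_op_is_rack[OF decomposition(2) Y(2)]
          rack_decomposition_pair_left[OF decomposition(2) Y(2) decomposition(3)]])
  also have "\<dots> = (lambda_rack S op + lambda_rack T op) * lambda_rack Y op'"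
    using decomposition(6,7) by (simp add: bz_distrib_right)
  also have "\<dots> = lambda_rack X op * lambda_rack Y op'"
    using lambda_rack_decomposition[OF decomposition(1-3)] by simp
  finally show ?case .
qed

lemma lambda_rack_connected_cycles:
  assumes "finite R" "connected_rack R op" "x \<in> R"
  shows "lambda_rack R op = bz_sum (\<lambda>n. bz_nsmul (num_cycles n (op x) R) (cyc n)) (card R)"
proof -
  let ?\<sigma> = "perm_restrict (op x) R"
  have "is_rack R op" using assms(2) unfolding connected_rack_def by simp
  then have bij: "bij_betw (op x) R R" by (rule rack_left_bij[OF _ assms(3)])
  have \<sigma>: "?\<sigma> permutes R" by (rule perm_restrict_permutes[OF bij])
  then have perm: "permutation ?\<sigma>" using assms(1) permutation_permutes by blast
  have "orbit ?\<sigma> z = orbit (op x) z" if "z \<in> R" for z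
    by (rule orbit_cong0[OF that]) (use bij in \<open>auto simp: perm_restrict_def bij_betwE\<close>)
  then have cycles: "num_cycles n ?\<sigma> R = num_cycles n (op x) R" for n
    unfolding num_cycles_def by (metis (no_types, lifting))
  have "lambda_rack R op = perm_class R (op x)" by (rule lambda_rack_connected[OF assms])
  also have "\<dots> = perm_class R ?\<sigma>" by (rule perm_class_cong) (simp add: perm_restrict_def)
  also have "\<dots> = (\<Sum>n\<in>{1..card R}. bz_nsmul (num_cycles n (op x) R) (cyc n))"
    using perm_class_cycle_decomposition[OF assms(1) perm permutes_image[OF \<sigma>] order_refl] by (simp add: cycles)
  finally show ?thesis by (simp add: bz_sum_eq_sum)
qed

definition lambda_code :: "rcode \<Rightarrow> pcode \<Rightarrow>\<^sub>0 int" where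
  "lambda_code A = lambda_gen (fst (Rep_rcode A)) (snd (Rep_rcode A))"

definition lambda_br :: "br \<Rightarrow> bz" where
  "lambda_br x = abs_bz (frag_extend lambda_code (rep_br x))"

lemma abs_bz_lambda_code: "Rep_rcode A = (X, op) \<Longrightarrow> abs_bz (lambda_code A) = lambda_rack X op"
  by (simp add: lambda_code_def lambda_rack_def)

lemma Rep_rcode_rack: "Rep_rcode A = (X, op) \<Longrightarrow> finite X" "Rep_rcode A = (X, op) \<Longrightarrow> is_rack X op"
  using Rep_rcode[of A] by auto

lemma Rep_rcode_prod:
  assumes "Rep_rcode A = (X, op)" "Rep_rcode B = (Y, op')"
  shows "Rep_rcode (rcode_prod A B) = (pair_set X Y, pair_op op op')"
proof -
  have "pair_op op op' = (\<lambda>u v. prod_encode (op (fst (prod_decode u)) (fst (prod_decode v)),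
      op' (snd (prod_decode u)) (snd (prod_decode v))))"
    by (simp add: fun_eq_iff pair_op_def pair_map_def map_prod_def split_def)
  then have "rcode_prod A B = Abs_rcode (pair_set X Y, pair_op op op')"
    unfolding rcode_prod_def assms pair_set_def by simp
  then show ?thesis
    using Rep_rcode_rack[OF assms(1)] Rep_rcode_rack[OF assms(2)]
    by (simp add: Abs_rcode_inverse finite_pair_set pair_op_is_rack)
qed

lemma frag_extend_lambda_code_rel: "u \<in> br_rel \<Longrightarrow> frag_extend lambda_code u \<in> bz_rel"
proof (induction rule: br_rel.induct)
  case (iso A X op B Y op')
  obtain h where "bij_betw h X Y" "\<forall>a\<in>X. \<forall>b\<in>X. h (op a b) = op' (h a) (h b)"
    using iso(3) unfolding rack_iso_def by blast
  then have "rack_isomorphism X op Y op' h"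
    using Rep_rcode_rack[OF iso(1)] Rep_rcode_rack[OF iso(2)] by unfold_locales auto
  then have "abs_bz (lambda_code A) = abs_bz (lambda_code B)"
    using lambda_rack_iso Rep_rcode_rack(1)[OF iso(1)] abs_bz_lambda_code[OF iso(1)] abs_bz_lambda_code[OF iso(2)]
    by metis
  then show ?case by (simp add: abs_bz_eq_iff frag_extend_diff)
next
  case (dec A X op S T B C)
  have "rack_decomposition X op S T" using dec(2-5) unfolding rack_decomposition_def by simp
  then have "abs_bz (lambda_code A) = abs_bz (lambda_code B + lambda_code C)"
    using lambda_rack_decomposition Rep_rcode_rack[OF dec(1)] abs_bz_lambda_code[OF dec(1)]
      abs_bz_lambda_code[OF dec(6)] abs_bz_lambda_code[OF dec(7)] abs_bz_add by metis
  then show ?case by (simp add: abs_bz_eq_iff frag_extend_diff frag_extend_add diff_diff_eq)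
next
  case zero
  show ?case by (simp add: bz_rel.zero)
next
  case (diff u v)
  then show ?case by (simp add: frag_extend_diff bz_rel.diff)
qed

lemma lambda_br_abs_br: "lambda_br (abs_br u) = abs_bz (frag_extend lambda_code u)"
proof -
  have "rep_br (abs_br u) - u \<in> br_rel"
    using Quotient3_rep_abs[OF Quotient3_br, of u] by (simp add: br_eq_def br_rel.zero)
  then show ?thesis
    unfolding lambda_br_def abs_bz_eq_iff frag_extend_diff[symmetric] by (rule frag_extend_lambda_code_rel)
qed

lemma lambda_br_b_rack: "finite R \<Longrightarrow> is_rack R op \<Longrightarrow> lambda_br (b_rack R op) = lambda_rack R op"
  by (simp add: b_rack_def lambda_br_abs_br abs_bz_lambda_code Abs_rcode_inverse)

lemma lambda_br_add: "lambda_br (x + y) = lambda_br x + lambda_br y"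
  unfolding plus_br_def lambda_br_abs_br by (simp add: lambda_br_def frag_extend_add abs_bz_add)

lemma lambda_br_mult: "lambda_br (x * y) = lambda_br x * lambda_br y"
proof -
  have "lambda_code (rcode_prod a b) - free_mul_z (lambda_code a) (lambda_code b) \<in> bz_rel" for a b
  proof -
    obtain X op Y op' where A: "Rep_rcode a = (X, op)" and B: "Rep_rcode b = (Y, op')" by (metis surj_pair)
    have "abs_bz (lambda_code (rcode_prod a b)) = abs_bz (lambda_code a) * abs_bz (lambda_code b)"
      using lambda_rack_pair[OF Rep_rcode_rack[OF A] Rep_rcode_rack[OF B]]
      by (simp add: abs_bz_lambda_code A B Rep_rcode_prod[OF A B])
    then show ?thesis by (simp add: abs_bz_mult abs_bz_eq_iff)
  qed
  then have rel: "frag_extend2 (\<lambda>a b. lambda_code (rcode_prod a b) - free_mul_z (lambda_code a) (lambda_code b))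
      (rep_br x) (rep_br y) \<in> bz_rel" by (rule bz_rel_frag_extend2)
  have "lambda_br (x * y) = abs_bz (frag_extend2 (\<lambda>a b. lambda_code (rcode_prod a b)) (rep_br x) (rep_br y))"
    unfolding times_br_def lambda_br_abs_br by (simp add: free_mul_r_eq frag_extend_frag_extend2)
  also have "\<dots> = abs_bz (frag_extend2 (\<lambda>a b. free_mul_z (lambda_code a) (lambda_code b)) (rep_br x) (rep_br y))"
    unfolding abs_bz_eq_iff frag_extend2_fun_diff[symmetric] by (rule rel)
  also have "\<dots> = lambda_br x * lambda_br y"
    unfolding lambda_br_def abs_bz_mult free_mul_z_frag_extend ..
  finally show ?thesis .
qed

lemma lambda_br_one: "lambda_br 1 = 1"
proof -
  have R: "finite {0::nat}" "connected_rack {0::nat} (\<lambda>a b. a)"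
    unfolding connected_rack_def is_rack_def by (auto simp: bij_betw_def intro: inn_orbit.base)
  have "perm_restrict (\<lambda>b. 0) {0::nat} = id" by (auto simp: perm_restrict_def)
  then have "perm_class {0} (\<lambda>b. 0) = 1" by (simp add: perm_class_def perm_gen_def one_bz_def b_perm_def)
  then show ?thesis
    using lambda_rack_connected[OF R, of 0] R
    by (simp add: one_br_def lambda_br_b_rack connected_rack_def)
qed

theorem proposition6p7:
  shows "\<exists>lam :: br \<Rightarrow> bz.
    (\<forall>x y. lam (x + y) = lam x + lam y) \<and>
    (\<forall>x y. lam (x * y) = lam x * lam y) \<and>
    lam 1 = 1 \<and>
    (\<forall>(R :: nat set) op. finite R \<and> connected_rack R op \<longrightarrow>
       (\<forall>x\<in>R. lam (b_rack R op) =
          bz_sum (\<lambda>n. bz_nsmul (num_cycles n (op x) R) (cyc n)) (card R)))"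
proof (intro exI[of _ lambda_br] conjI allI impI ballI)
  fix R :: "nat set" and op :: "nat \<Rightarrow> nat \<Rightarrow> nat" and x
  assume "finite R \<and> connected_rack R op" "x \<in> R"
  then show "lambda_br (b_rack R op) = bz_sum (\<lambda>n. bz_nsmul (num_cycles n (op x) R) (cyc n)) (card R)"
    using lambda_br_b_rack lambda_rack_connected_cycles unfolding connected_rack_def by metis
qed (simp_all add: lambda_br_add lambda_br_mult lambda_br_one)

end
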